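(* Let $n\ge2$ and let $\Phi:\mathfrak{B}([n])\to\mathbf{Gpd}$ be a covariant strict 2-functor. Suppose: (A1) for $k\in\{n-2,n-1\}$ with $k\ge1$, the condition $A^{[k]}_\emptyset$ holds, i.e. the canonical functor $\operatorname{colim}_{\mathfrak{B}([k])}\Phi\to\Phi([k])$ is injective on objects; (A2) for every integer $1\le k\le n-2$ and every subset $U\subseteq\{k+2,\dots,n\}$ with $|U|\ge n-k-2$, the condition $A^V_U$ holds with $V=[k]\sqcup U$, i.e. the canonical functor $\operatorname{colim}_{\mathfrak{B}(V:U)}\Phi\to\Phi(V)$ is injective on objects. Then the comparison functor $\delta:\operatorname{2colim}_{\mathfrak{B}([n])}\Phi\to\operatorname{colim}_{\mathfrak{B}([n])}\Phi$ is an equivalence of categories.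
   Context: For $n\ge1$, $[n]=\{1,\dots,n\}$. For a finite set $V$, $\mathfrak{B}(V)$ is the poset of proper subsets of $V$ ordered by inclusion; for $U\subsetneq V$, $\mathfrak{B}(V:U)=\{X:U\subseteq X\subsetneq V\}$; these are regarded as subposets of $\mathfrak{B}([n])$ and colimits over them are of the restriction of $\Phi$. $\mathbf{Gpd}$ is the 2-category of small groupoids. A functor is injective on objects if its map on object sets is injective. $\operatorname{colim}\Phi$ is the ordinary colimit in the category of small groupoids; the canonical functor $\operatorname{colim}_{\mathfrak{B}(V:U)}\Phi\to\Phi(V)$ is induced by the functors $\Phi(X)\to\Phi(V)$. $\operatorname{2colim}\Phi$ is the groupoid 2-representing $\mathcal G\mapsto\operatorname{2lim}_i\operatorname{Hom}_{\mathbf{Gpd}}(\Phi(i),\mathcal G)$ (the 2-limit being the groupoid of families of functors $X_i$ with natural isomorphisms $X_i\Rightarrow X_j\circ\Phi_{i,j}$ satisfying the 1-cocycle condition); concretely it is the Grothendieck construction $\int\Phi$ with all morphisms inverted. The comparison functor $\delta$ is induced by the fully faithful functor $\lim\operatorname{Hom}(\Phi,\mathcal G)\to\operatorname{2lim}\operatorname{Hom}(\Phi,\mathcal G)$, $(x_i)\mapsto(x_i,\mathrm{id})$; concretely it sends $(i,x)$ to the image of $x$ in $\operatorname{colim}\Phi$. *)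

theory Defs
  imports Main
begin

section \<open>Small groupoids, functors, natural isomorphisms, equivalences\<close>

text \<open>A (small) groupoid given by an object set, an arrow set, domain, codomain,
  composition (Comp g f = g after f, defined when Cod f = Dom g) and identities.\<close>

record ('o, 'm) gpd =
  Obj  :: "'o set"
  Arr  :: "'m set"
  Dom  :: "'m \<Rightarrow> 'o"
  Cod  :: "'m \<Rightarrow> 'o"
  Comp :: "'m \<Rightarrow> 'm \<Rightarrow> 'm"
  Idt  :: "'o \<Rightarrow> 'm"

definition groupoid :: "('o, 'm) gpd \<Rightarrow> bool" where
  "groupoid G \<longleftrightarrow>
     (\<forall>f\<in>Arr G. Dom G f \<in> Obj G \<and> Cod G f \<in> Obj G) \<and>
     (\<forall>a\<in>Obj G. Idt G a \<in> Arr G \<and> Dom G (Idt G a) = a \<and> Cod G (Idt G a) = a) \<and>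
     (\<forall>f\<in>Arr G. \<forall>g\<in>Arr G. Cod G f = Dom G g \<longrightarrow>
        Comp G g f \<in> Arr G \<and> Dom G (Comp G g f) = Dom G f \<and> Cod G (Comp G g f) = Cod G g) \<and>
     (\<forall>f\<in>Arr G. Comp G f (Idt G (Dom G f)) = f \<and> Comp G (Idt G (Cod G f)) f = f) \<and>
     (\<forall>f\<in>Arr G. \<forall>g\<in>Arr G. \<forall>h\<in>Arr G. Cod G f = Dom G g \<longrightarrow> Cod G g = Dom G h \<longrightarrow>
        Comp G h (Comp G g f) = Comp G (Comp G h g) f) \<and>
     (\<forall>f\<in>Arr G. \<exists>g\<in>Arr G. Dom G g = Cod G f \<and> Cod G g = Dom G f \<and>
        Comp G g f = Idt G (Dom G f) \<and> Comp G f g = Idt G (Cod G f))"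

definition gfunctor ::
  "('o, 'm) gpd \<Rightarrow> ('p, 'n) gpd \<Rightarrow> ('o \<Rightarrow> 'p) \<Rightarrow> ('m \<Rightarrow> 'n) \<Rightarrow> bool" where
  "gfunctor G H fo fm \<longleftrightarrow>
     (\<forall>a\<in>Obj G. fo a \<in> Obj H) \<and>
     (\<forall>f\<in>Arr G. fm f \<in> Arr H \<and> Dom H (fm f) = fo (Dom G f) \<and> Cod H (fm f) = fo (Cod G f)) \<and>
     (\<forall>a\<in>Obj G. fm (Idt G a) = Idt H (fo a)) \<and>
     (\<forall>f\<in>Arr G. \<forall>g\<in>Arr G. Cod G f = Dom G g \<longrightarrow> fm (Comp G g f) = Comp H (fm g) (fm f))"

definition nat_iso ::
  "('o, 'm) gpd \<Rightarrow> ('p, 'n) gpd \<Rightarrow> ('o \<Rightarrow> 'p) \<Rightarrow> ('m \<Rightarrow> 'n) \<Rightarrow> ('o \<Rightarrow> 'p) \<Rightarrow> ('m \<Rightarrow> 'n)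
   \<Rightarrow> ('o \<Rightarrow> 'n) \<Rightarrow> bool" where
  "nat_iso G H f1o f1m f2o f2m eta \<longleftrightarrow>
     (\<forall>a\<in>Obj G. eta a \<in> Arr H \<and> Dom H (eta a) = f1o a \<and> Cod H (eta a) = f2o a \<and>
        (\<exists>g\<in>Arr H. Dom H g = f2o a \<and> Cod H g = f1o a \<and>
           Comp H g (eta a) = Idt H (f1o a) \<and> Comp H (eta a) g = Idt H (f2o a))) \<and>
     (\<forall>f\<in>Arr G. Comp H (eta (Cod G f)) (f1m f) = Comp H (f2m f) (eta (Dom G f)))"

definition gpd_equivalence ::
  "('o, 'm) gpd \<Rightarrow> ('p, 'n) gpd \<Rightarrow> ('o \<Rightarrow> 'p) \<Rightarrow> ('m \<Rightarrow> 'n) \<Rightarrow> bool" where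
  "gpd_equivalence G H fo fm \<longleftrightarrow>
     gfunctor G H fo fm \<and>
     (\<exists>go gm eta eps. gfunctor H G go gm \<and>
        nat_iso G G id id (go \<circ> fo) (gm \<circ> fm) eta \<and>
        nat_iso H H (fo \<circ> go) (fm \<circ> gm) id id eps)"

section \<open>Diagrams of groupoids over posets of finite sets\<close>

text \<open>A covariant strict 2-functor from a poset P (ordered by inclusion, only identity
  2-cells) to Gpd: groupoids Phi X, functors (Fo X Y, Fm X Y) for X \<subseteq> Y, strictly
  preserving identities and composition.\<close>
definition gpd_diagram ::
  "nat set set \<Rightarrow> (nat set \<Rightarrow> ('o, 'm) gpd) \<Rightarrow> (nat set \<Rightarrow> nat set \<Rightarrow> 'o \<Rightarrow> 'o)
   \<Rightarrow> (nat set \<Rightarrow> nat set \<Rightarrow> 'm \<Rightarrow> 'm) \<Rightarrow> bool" where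
  "gpd_diagram P Phi Fo Fm \<longleftrightarrow>
     (\<forall>X\<in>P. groupoid (Phi X)) \<and>
     (\<forall>X\<in>P. \<forall>Y\<in>P. X \<subseteq> Y \<longrightarrow> gfunctor (Phi X) (Phi Y) (Fo X Y) (Fm X Y)) \<and>
     (\<forall>X\<in>P. (\<forall>a\<in>Obj (Phi X). Fo X X a = a) \<and> (\<forall>f\<in>Arr (Phi X). Fm X X f = f)) \<and>
     (\<forall>X\<in>P. \<forall>Y\<in>P. \<forall>Z\<in>P. X \<subseteq> Y \<longrightarrow> Y \<subseteq> Z \<longrightarrow>
        (\<forall>a\<in>Obj (Phi X). Fo Y Z (Fo X Y a) = Fo X Z a) \<and>
        (\<forall>f\<in>Arr (Phi X). Fm Y Z (Fm X Y f) = Fm X Z f))"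

text \<open>B(V:U) = {X. U \<subseteq> X \<subset> V}; B(V) = B(V:{}).\<close>
definition Bposet :: "nat set \<Rightarrow> nat set \<Rightarrow> nat set set" where
  "Bposet V U = {X. U \<subseteq> X \<and> X \<subset> V}"

section \<open>Groupoids presented by generators and relations\<close>

text \<open>Words in edges and formal inverses: (e, True) is e, (e, False) is e inverse.
  Words are read in the order of travel.\<close>
type_synonym 'e word = "('e \<times> bool) list"

fun wpath :: "'e set \<Rightarrow> ('e \<Rightarrow> 'v) \<Rightarrow> ('e \<Rightarrow> 'v) \<Rightarrow> 'v \<Rightarrow> 'e word \<Rightarrow> 'v \<Rightarrow> bool" where
  "wpath E s t a [] b \<longleftrightarrow> a = b"
| "wpath E s t a ((e, d) # w) b \<longleftrightarrow> e \<in> E \<and>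
     (if d then s e = a \<and> wpath E s t (t e) w b else t e = a \<and> wpath E s t (s e) w b)"

inductive wequiv :: "'e set \<Rightarrow> ('e \<Rightarrow> 'v) \<Rightarrow> ('e \<Rightarrow> 'v) \<Rightarrow> ('e word \<times> 'e word) set
    \<Rightarrow> 'v \<Rightarrow> 'v \<Rightarrow> 'e word \<Rightarrow> 'e word \<Rightarrow> bool"
  for E s t R where
  refl: "wpath E s t a w b \<Longrightarrow> wequiv E s t R a b w w"
| sym: "wequiv E s t R a b w v \<Longrightarrow> wequiv E s t R a b v w"
| trans: "wequiv E s t R a b u v \<Longrightarrow> wequiv E s t R a b v w \<Longrightarrow> wequiv E s t R a b u w"
| cancel: "wpath E s t a (u @ [(e, d), (e, \<not> d)] @ v) b \<Longrightarrow>
     wequiv E s t R a b (u @ [(e, d), (e, \<not> d)] @ v) (u @ v)"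
| rel: "(r, q) \<in> R \<Longrightarrow> wpath E s t a (u @ r @ v) b \<Longrightarrow> wpath E s t a (u @ q @ v) b \<Longrightarrow>
     wequiv E s t R a b (u @ r @ v) (u @ q @ v)"

definition wclass :: "'e set \<Rightarrow> ('e \<Rightarrow> 'v) \<Rightarrow> ('e \<Rightarrow> 'v) \<Rightarrow> ('e word \<times> 'e word) set
    \<Rightarrow> 'v \<Rightarrow> 'v \<Rightarrow> 'e word \<Rightarrow> 'e word set" where
  "wclass E s t R a b w = {w'. wequiv E s t R a b w w'}"

text \<open>The groupoid presented by the graph (V, E, s, t) and relations R. An arrow is a
  triple (a, b, class of a path from a to b).\<close>
definition pres_gpd :: "'v set \<Rightarrow> 'e set \<Rightarrow> ('e \<Rightarrow> 'v) \<Rightarrow> ('e \<Rightarrow> 'v)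
    \<Rightarrow> ('e word \<times> 'e word) set \<Rightarrow> ('v, 'v \<times> 'v \<times> 'e word set) gpd" where
  "pres_gpd V E s t R =
    \<lparr> Obj = V,
      Arr = {(a, b, wclass E s t R a b w) | a b w. a \<in> V \<and> b \<in> V \<and> wpath E s t a w b},
      Dom = (\<lambda>(a, b, W). a),
      Cod = (\<lambda>(a, b, W). b),
      Comp = (\<lambda>(b', c, W2) (a, b, W1).
                (a, c, wclass E s t R a c ((SOME w. w \<in> W1) @ (SOME w. w \<in> W2)))),
      Idt = (\<lambda>a. (a, a, wclass E s t R a a [])) \<rparr>"

definition winv :: "'f word \<Rightarrow> 'f word" where
  "winv w = rev (map (\<lambda>(e, d). (e, \<not> d)) w)"

definition wlift :: "('e \<Rightarrow> 'f word) \<Rightarrow> 'e word \<Rightarrow> 'f word" where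
  "wlift h w = concat (map (\<lambda>(e, d). if d then h e else winv (h e)) w)"

definition pres_fun_arr :: "'f set \<Rightarrow> ('f \<Rightarrow> 'w) \<Rightarrow> ('f \<Rightarrow> 'w) \<Rightarrow> ('f word \<times> 'f word) set
    \<Rightarrow> ('v \<Rightarrow> 'w) \<Rightarrow> ('e \<Rightarrow> 'f word) \<Rightarrow> 'v \<times> 'v \<times> 'e word set \<Rightarrow> 'w \<times> 'w \<times> 'f word set" where
  "pres_fun_arr E' s' t' R' ho h =
     (\<lambda>(a, b, W). (ho a, ho b, wclass E' s' t' R' (ho a) (ho b) (wlift h (SOME w. w \<in> W))))"

section \<open>colim and 2colim of a diagram of groupoids\<close>

context
  fixes P :: "nat set set"
    and Phi :: "nat set \<Rightarrow> ('o, 'm) gpd"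
    and Fo :: "nat set \<Rightarrow> nat set \<Rightarrow> 'o \<Rightarrow> 'o"
    and Fm :: "nat set \<Rightarrow> nat set \<Rightarrow> 'm \<Rightarrow> 'm"
begin

text \<open>Objects of the Grothendieck construction: pairs (X, x) with x an object of Phi X.\<close>
definition tot_obj :: "(nat set \<times> 'o) set" where
  "tot_obj = {(X, x). X \<in> P \<and> x \<in> Obj (Phi X)}"

definition obj_rel :: "((nat set \<times> 'o) \<times> (nat set \<times> 'o)) set" where
  "obj_rel = (let S = {((X, x), (Y, Fo X Y x)) | X Y x. X \<in> P \<and> Y \<in> P \<and> X \<subseteq> Y \<and> x \<in> Obj (Phi X)}
              in (S \<union> S\<inverse>)\<^sup>*)"

definition colim_V :: "(nat set \<times> 'o) set set" where
  "colim_V = tot_obj // obj_rel"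

definition colim_E :: "(nat set \<times> 'm) set" where
  "colim_E = {(X, f). X \<in> P \<and> f \<in> Arr (Phi X)}"

definition colim_s :: "nat set \<times> 'm \<Rightarrow> (nat set \<times> 'o) set" where
  "colim_s = (\<lambda>(X, f). obj_rel `` {(X, Dom (Phi X) f)})"

definition colim_t :: "nat set \<times> 'm \<Rightarrow> (nat set \<times> 'o) set" where
  "colim_t = (\<lambda>(X, f). obj_rel `` {(X, Cod (Phi X) f)})"

definition colim_R :: "((nat set \<times> 'm) word \<times> (nat set \<times> 'm) word) set" where
  "colim_R =
     {([((X, f), True), ((X, g), True)], [((X, Comp (Phi X) g f), True)]) | X f g.
        X \<in> P \<and> f \<in> Arr (Phi X) \<and> g \<in> Arr (Phi X) \<and> Cod (Phi X) f = Dom (Phi X) g} \<union>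
     {([((X, Idt (Phi X) x), True)], []) | X x. X \<in> P \<and> x \<in> Obj (Phi X)} \<union>
     {([((X, f), True)], [((Y, Fm X Y f), True)]) | X Y f.
        X \<in> P \<and> Y \<in> P \<and> X \<subseteq> Y \<and> f \<in> Arr (Phi X)}"

definition colim :: "((nat set \<times> 'o) set,
    (nat set \<times> 'o) set \<times> (nat set \<times> 'o) set \<times> (nat set \<times> 'm) word set) gpd" where
  "colim = pres_gpd colim_V colim_E colim_s colim_t colim_R"

definition canon_obj :: "nat set \<Rightarrow> (nat set \<times> 'o) set \<Rightarrow> 'o" where
  "canon_obj V c = (case (SOME p. p \<in> c) of (X, x) \<Rightarrow> Fo X V x)"

subsection \<open>The 2-colimit: the Grothendieck construction with all morphisms inverted\<close>

text \<open>Morphisms of the Grothendieck construction: (X, x, Y, f) : (X, x) \<rightarrow> (Y, Cod f)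
  with X \<subseteq> Y and f : Fo X Y x \<rightarrow> _ in Phi Y.\<close>
definition groth_E :: "(nat set \<times> 'o \<times> nat set \<times> 'm) set" where
  "groth_E = {(X, x, Y, f). X \<in> P \<and> Y \<in> P \<and> X \<subseteq> Y \<and> x \<in> Obj (Phi X) \<and>
                f \<in> Arr (Phi Y) \<and> Dom (Phi Y) f = Fo X Y x}"

definition groth_s :: "nat set \<times> 'o \<times> nat set \<times> 'm \<Rightarrow> nat set \<times> 'o" where
  "groth_s = (\<lambda>(X, x, Y, f). (X, x))"

definition groth_t :: "nat set \<times> 'o \<times> nat set \<times> 'm \<Rightarrow> nat set \<times> 'o" where
  "groth_t = (\<lambda>(X, x, Y, f). (Y, Cod (Phi Y) f))"

definition groth_R :: "((nat set \<times> 'o \<times> nat set \<times> 'm) word \<times> (nat set \<times> 'o \<times> nat set \<times> 'm) word) set" where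
  "groth_R =
     {([((X, x, Y, f), True), ((Y, Cod (Phi Y) f, Z, g), True)],
       [((X, x, Z, Comp (Phi Z) g (Fm Y Z f)), True)]) | X x Y f Z g.
        (X, x, Y, f) \<in> groth_E \<and> (Y, Cod (Phi Y) f, Z, g) \<in> groth_E} \<union>
     {([((X, x, X, Idt (Phi X) x), True)], []) | X x. X \<in> P \<and> x \<in> Obj (Phi X)}"

definition twocolim :: "(nat set \<times> 'o,
    (nat set \<times> 'o) \<times> (nat set \<times> 'o) \<times> (nat set \<times> 'o \<times> nat set \<times> 'm) word set) gpd" where
  "twocolim = pres_gpd tot_obj groth_E groth_s groth_t groth_R"

definition delta_obj :: "nat set \<times> 'o \<Rightarrow> (nat set \<times> 'o) set" where
  "delta_obj p = obj_rel `` {p}"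

definition delta_arr ::
  "(nat set \<times> 'o) \<times> (nat set \<times> 'o) \<times> (nat set \<times> 'o \<times> nat set \<times> 'm) word set
   \<Rightarrow> (nat set \<times> 'o) set \<times> (nat set \<times> 'o) set \<times> (nat set \<times> 'm) word set" where
  "delta_arr = pres_fun_arr colim_E colim_s colim_t colim_R delta_obj
                 (\<lambda>(X, x, Y, f). [((Y, f), True)])"

end

text \<open>Condition A^V_U: the canonical functor colim over B(V:U) \<rightarrow> Phi V is injective on objects.\<close>
definition condA :: "(nat set \<Rightarrow> ('o, 'm) gpd) \<Rightarrow> (nat set \<Rightarrow> nat set \<Rightarrow> 'o \<Rightarrow> 'o)
    \<Rightarrow> (nat set \<Rightarrow> nat set \<Rightarrow> 'm \<Rightarrow> 'm) \<Rightarrow> nat set \<Rightarrow> nat set \<Rightarrow> bool" where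
  "condA Phi Fo Fm V U \<longleftrightarrow>
     inj_on (canon_obj Fo V) (Obj (colim (Bposet V U) Phi Fo Fm))"

end

theory Submission
  imports Defs
begin

(*
  The comparison functor delta is an equivalence as soon as one can choose, for every object
  (X, x) of the Grothendieck construction, an arrow k(X, x) of the 2-colimit out of (X, x) that
  delta sends to an identity, compatibly with the structure arrows iota: (X, x) -> (Y, Phi_XY x),
  i.e. k(Y, Phi_XY x) o iota = k(X, x).  The quasi-inverse then sends the class of (X, x) to the
  target of k(X, x) and the generator f of Phi X to k o f o k^-1; compatibility of k is what makes
  the relations f = Phi_XY f of the colimit hold.

  Such a k is built by induction on m over the families of the proper subsets X of [n] that
  contain {m+1..n}.  Passing from m - 1 to m adds the X with m not in X.  If X is strictly
  contained in the facet [n] - {m}, precompose the choice at X + {m} with the structure arrow.  On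
  the facet itself the choices transported from the various X below it agree, because objects of
  B([n] - {m} : {m+1..n}) with the same image in Phi([n] - {m}) are connected by structure
  arrows: this is condition A for that facet.
*)

section \<open>Groupoids\<close>

locale small_groupoid =
  fixes G :: "('o, 'm) gpd"
  assumes groupoid: "groupoid G"
begin

lemma dom_obj [simp]: "f \<in> Arr G \<Longrightarrow> Dom G f \<in> Obj G"
  and cod_obj [simp]: "f \<in> Arr G \<Longrightarrow> Cod G f \<in> Obj G"
  and idt_arr [simp]: "a \<in> Obj G \<Longrightarrow> Idt G a \<in> Arr G"
  and dom_idt [simp]: "a \<in> Obj G \<Longrightarrow> Dom G (Idt G a) = a"
  and cod_idt [simp]: "a \<in> Obj G \<Longrightarrow> Cod G (Idt G a) = a"
  using groupoid unfolding groupoid_def by auto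

lemma comp_arr [simp]: "f \<in> Arr G \<Longrightarrow> g \<in> Arr G \<Longrightarrow> Cod G f = Dom G g \<Longrightarrow> Comp G g f \<in> Arr G"
  and dom_comp [simp]: "f \<in> Arr G \<Longrightarrow> g \<in> Arr G \<Longrightarrow> Cod G f = Dom G g \<Longrightarrow> Dom G (Comp G g f) = Dom G f"
  and cod_comp [simp]: "f \<in> Arr G \<Longrightarrow> g \<in> Arr G \<Longrightarrow> Cod G f = Dom G g \<Longrightarrow> Cod G (Comp G g f) = Cod G g"
  using groupoid unfolding groupoid_def by auto

lemma comp_idt_dom [simp]: "f \<in> Arr G \<Longrightarrow> Dom G f = a \<Longrightarrow> Comp G f (Idt G a) = f"
  and comp_idt_cod [simp]: "f \<in> Arr G \<Longrightarrow> Cod G f = a \<Longrightarrow> Comp G (Idt G a) f = f"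
  using groupoid unfolding groupoid_def by auto

lemma comp_assoc:
  "f \<in> Arr G \<Longrightarrow> g \<in> Arr G \<Longrightarrow> h \<in> Arr G \<Longrightarrow> Cod G f = Dom G g \<Longrightarrow> Cod G g = Dom G h \<Longrightarrow>
   Comp G h (Comp G g f) = Comp G (Comp G h g) f"
  using groupoid unfolding groupoid_def by blast

definition ginv :: "'m \<Rightarrow> 'm" where
  "ginv f = (SOME g. g \<in> Arr G \<and> Dom G g = Cod G f \<and> Cod G g = Dom G f \<and>
        Comp G g f = Idt G (Dom G f) \<and> Comp G f g = Idt G (Cod G f))"

lemma ginv_arr [simp]: "f \<in> Arr G \<Longrightarrow> ginv f \<in> Arr G"
  and dom_ginv [simp]: "f \<in> Arr G \<Longrightarrow> Dom G (ginv f) = Cod G f"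
  and cod_ginv [simp]: "f \<in> Arr G \<Longrightarrow> Cod G (ginv f) = Dom G f"
  and comp_ginv_left [simp]: "f \<in> Arr G \<Longrightarrow> Comp G (ginv f) f = Idt G (Dom G f)"
  and comp_ginv_right [simp]: "f \<in> Arr G \<Longrightarrow> Comp G f (ginv f) = Idt G (Cod G f)"
proof -
  assume "f \<in> Arr G"
  then have "\<exists>g. g \<in> Arr G \<and> Dom G g = Cod G f \<and> Cod G g = Dom G f \<and>
      Comp G g f = Idt G (Dom G f) \<and> Comp G f g = Idt G (Cod G f)"
    using groupoid unfolding groupoid_def by blast
  then have "ginv f \<in> Arr G \<and> Dom G (ginv f) = Cod G f \<and> Cod G (ginv f) = Dom G f \<and>
      Comp G (ginv f) f = Idt G (Dom G f) \<and> Comp G f (ginv f) = Idt G (Cod G f)"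
    unfolding ginv_def by (rule someI_ex)
  then show "ginv f \<in> Arr G" "Dom G (ginv f) = Cod G f" "Cod G (ginv f) = Dom G f"
    "Comp G (ginv f) f = Idt G (Dom G f)" "Comp G f (ginv f) = Idt G (Cod G f)"
    by auto
qed

lemma comp_comp_ginv [simp]:
  assumes "f \<in> Arr G" "g \<in> Arr G" "Cod G f = Dom G g"
  shows "Comp G (Comp G g f) (ginv f) = g"
  using assms by (simp add: comp_assoc[symmetric])

lemma comp_ginv_comp [simp]:
  assumes "f \<in> Arr G" "g \<in> Arr G" "Dom G g = Dom G f"
  shows "Comp G (Comp G g (ginv f)) f = g"
  using assms by (simp add: comp_assoc[symmetric])

lemma comp_cancel_right:
  assumes "f \<in> Arr G" "g \<in> Arr G" "h \<in> Arr G" "Cod G h = Dom G f" "Cod G h = Dom G g"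
    and "Comp G f h = Comp G g h"
  shows "f = g"
  using comp_comp_ginv[of h f] comp_comp_ginv[of h g] assms by simp

lemma ginv_unique:
  assumes "f \<in> Arr G" "g \<in> Arr G" "Dom G g = Cod G f" "Comp G g f = Idt G (Dom G f)"
  shows "ginv f = g"
  by (rule comp_cancel_right[of _ _ f]) (use assms in auto)

lemma ginv_idt [simp]: "a \<in> Obj G \<Longrightarrow> ginv (Idt G a) = Idt G a"
  by (rule ginv_unique) auto

lemma naturality_comp:
  assumes "x1 \<in> Arr G" "y1 \<in> Arr G" "x2 \<in> Arr G" "y2 \<in> Arr G" "ea \<in> Arr G" "eb \<in> Arr G" "ec \<in> Arr G"
    and "Cod G x1 = Dom G y1" "Cod G x2 = Dom G y2" "Dom G eb = Cod G x1" "Cod G eb = Dom G y2"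
      "Dom G ec = Cod G y1" "Cod G ea = Dom G x2"
    and "Comp G eb x1 = Comp G x2 ea" and "Comp G ec y1 = Comp G y2 eb"
  shows "Comp G ec (Comp G y1 x1) = Comp G (Comp G y2 x2) ea"
  using assms by (metis comp_assoc)

lemma naturality_ginv:
  assumes "x1 \<in> Arr G" "x2 \<in> Arr G" "ea \<in> Arr G" "eb \<in> Arr G"
    and "Dom G eb = Cod G x1" "Cod G eb = Cod G x2" "Dom G ea = Dom G x1" "Cod G ea = Dom G x2"
    and "Comp G eb x1 = Comp G x2 ea"
  shows "Comp G ea (ginv x1) = Comp G (ginv x2) eb"
proof (rule comp_cancel_right[of _ _ x1])
  have "Comp G (Comp G (ginv x2) eb) x1 = Comp G (ginv x2) (Comp G x2 ea)"
    using assms by (simp add: comp_assoc[symmetric])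
  also have "\<dots> = ea"
    using assms by (simp add: comp_assoc)
  finally show "Comp G (Comp G ea (ginv x1)) x1 = Comp G (Comp G (ginv x2) eb) x1"
    using assms by simp
qed (use assms in auto)

lemma comp_ginv_precomp:
  assumes "i \<in> Arr G" "j \<in> Arr G" "k \<in> Arr G" "Cod G i = Dom G j" "Dom G k = Dom G j"
  shows "Comp G (Comp G k i) (ginv (Comp G j i)) = Comp G k (ginv j)"
proof (rule comp_cancel_right[of _ _ "Comp G j i"])
  have "Comp G (Comp G k (ginv j)) (Comp G j i) = Comp G (Comp G (Comp G k (ginv j)) j) i"
    using assms by (intro comp_assoc) auto
  then show "Comp G (Comp G (Comp G k i) (ginv (Comp G j i))) (Comp G j i) =
      Comp G (Comp G k (ginv j)) (Comp G j i)"
    using assms by simp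
qed (use assms in auto)

definition conjugate :: "'m \<Rightarrow> 'm \<Rightarrow> 'm \<Rightarrow> 'm" where
  "conjugate kp g kq = Comp G kq (Comp G g (ginv kp))"

lemma conjugate_idt: "g \<in> Arr G \<Longrightarrow> conjugate (Idt G (Dom G g)) g (Idt G (Cod G g)) = g"
  by (simp add: conjugate_def)

context
  fixes kp kq g
  assumes arr: "kp \<in> Arr G" "kq \<in> Arr G" "g \<in> Arr G"
    and dom: "Dom G kp = Dom G g" "Cod G g = Dom G kq"
begin

lemma conjugate_arr [simp]: "conjugate kp g kq \<in> Arr G"
  and dom_conjugate [simp]: "Dom G (conjugate kp g kq) = Cod G kp"
  and cod_conjugate [simp]: "Cod G (conjugate kp g kq) = Cod G kq"
  using arr dom by (auto simp: conjugate_def)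

lemma conjugate_comp_right: "Comp G (conjugate kp g kq) kp = Comp G kq g"
  using arr dom by (simp add: conjugate_def comp_assoc[symmetric])

lemma conjugate_eq_idt: "Comp G kq g = kp \<Longrightarrow> conjugate kp g kq = Idt G (Cod G kp)"
  using arr dom by (auto simp: conjugate_def comp_assoc)

lemma conjugate_comp:
  assumes "kr \<in> Arr G" "h \<in> Arr G" "Dom G h = Dom G kq" "Cod G h = Dom G kr"
  shows "Comp G (conjugate kq h kr) (conjugate kp g kq) = conjugate kp (Comp G h g) kr"
proof -
  have "Comp G (conjugate kq h kr) (conjugate kp g kq) =
      Comp G kr (Comp G (Comp G (Comp G h (ginv kq)) kq) (Comp G g (ginv kp)))"
    using arr dom assms by (simp add: conjugate_def comp_assoc)
  then show ?thesis
    using arr dom assms by (simp add: conjugate_def comp_assoc)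
qed

end

end

lemma gfunctorD:
  assumes "gfunctor G H fo fm"
  shows "a \<in> Obj G \<Longrightarrow> fo a \<in> Obj H"
    and "f \<in> Arr G \<Longrightarrow> fm f \<in> Arr H"
    and "f \<in> Arr G \<Longrightarrow> Dom H (fm f) = fo (Dom G f)"
    and "f \<in> Arr G \<Longrightarrow> Cod H (fm f) = fo (Cod G f)"
    and "a \<in> Obj G \<Longrightarrow> fm (Idt G a) = Idt H (fo a)"
    and "f \<in> Arr G \<Longrightarrow> g \<in> Arr G \<Longrightarrow> Cod G f = Dom G g \<Longrightarrow> fm (Comp G g f) = Comp H (fm g) (fm f)"
  using assms unfolding gfunctor_def by auto

lemma gfunctor_ginv:
  assumes "groupoid G" "groupoid H" "gfunctor G H fo fm" "f \<in> Arr G"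
  shows "fm (small_groupoid.ginv G f) = small_groupoid.ginv H (fm f)"
proof -
  interpret G: small_groupoid G by (rule small_groupoid.intro) fact
  interpret H: small_groupoid H by (rule small_groupoid.intro) fact
  show ?thesis
    using assms(4) gfunctorD[OF assms(3)]
    by (intro H.ginv_unique[symmetric]) (auto simp: gfunctorD(6)[OF assms(3), symmetric])
qed

lemma gfunctor_comp:
  "gfunctor G H fo fm \<Longrightarrow> gfunctor H K go gm \<Longrightarrow> gfunctor G K (go \<circ> fo) (gm \<circ> fm)"
  unfolding gfunctor_def by auto

lemma gfunctor_id: "groupoid G \<Longrightarrow> gfunctor G G id id"
  using small_groupoid.dom_obj small_groupoid.cod_obj small_groupoid.intro
  unfolding gfunctor_def by fastforce

lemma gfunctor_cong:
  assumes "groupoid G" "gfunctor G H fo fm" "\<And>f. f \<in> Arr G \<Longrightarrow> fm f = fm' f"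
  shows "gfunctor G H fo fm'"
proof -
  interpret small_groupoid G by (rule small_groupoid.intro) fact
  show ?thesis using assms(2,3) unfolding gfunctor_def by auto
qed

section \<open>Words and presented groupoids\<close>

lemma wpath_append: "wpath E s t a (u @ v) b \<longleftrightarrow> (\<exists>c. wpath E s t a u c \<and> wpath E s t c v b)"
proof (induction u arbitrary: a)
  case (Cons x u)
  then show ?case by (cases x) (simp_all add: Cons.IH)
qed simp

lemma wpath_appendI: "wpath E s t a u c \<Longrightarrow> wpath E s t c v b \<Longrightarrow> wpath E s t a (u @ v) b"
  using wpath_append by metis

lemma wpath_target_unique: "wpath E s t a u b \<Longrightarrow> wpath E s t a u c \<Longrightarrow> b = c"
  by (induction u arbitrary: a) (auto split: if_splits)

lemma wpath_source_unique: "wpath E s t a u b \<Longrightarrow> wpath E s t c u b \<Longrightarrow> u \<noteq> [] \<Longrightarrow> a = c"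
  by (cases u) (auto split: if_splits)

lemma wpath_closed:
  "(\<And>e. e \<in> E \<Longrightarrow> s e \<in> V \<and> t e \<in> V) \<Longrightarrow> wpath E s t a w b \<Longrightarrow> a \<in> V \<Longrightarrow> b \<in> V"
proof (induction w arbitrary: a)
  case (Cons x w)
  then show ?case by (cases x) (auto split: if_splits)
qed simp

lemma wequiv_wpath: "wequiv E s t R a b w v \<Longrightarrow> wpath E s t a w b \<and> wpath E s t a v b"
  by (induction rule: wequiv.induct) (auto simp: wpath_append split: if_splits)

lemma wequiv_append_right:
  "wequiv E s t R a b w w' \<Longrightarrow> wpath E s t b v c \<Longrightarrow> wequiv E s t R a c (w @ v) (w' @ v)"
proof (induction rule: wequiv.induct)
  case (cancel a u e d v' b)
  have "wequiv E s t R a c (u @ [(e, d), (e, \<not> d)] @ (v' @ v)) (u @ (v' @ v))"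
    by (rule wequiv.cancel) (use wpath_appendI[OF cancel.hyps cancel.prems] in simp)
  then show ?case by simp
next
  case (rel r q a u v' b)
  have "wequiv E s t R a c (u @ r @ (v' @ v)) (u @ q @ (v' @ v))"
    by (rule wequiv.rel)
      (use rel.hyps wpath_appendI[OF rel.hyps(2) rel.prems] wpath_appendI[OF rel.hyps(3) rel.prems]
          in simp_all)
  then show ?case by simp
qed (auto intro: wequiv.intros wpath_appendI)

lemma wequiv_append_left:
  "wequiv E s t R a b w w' \<Longrightarrow> wpath E s t c v a \<Longrightarrow> wequiv E s t R c b (v @ w) (v @ w')"
proof (induction rule: wequiv.induct)
  case (cancel a u e d v' b)
  have "wequiv E s t R c b ((v @ u) @ [(e, d), (e, \<not> d)] @ v') ((v @ u) @ v')"
    by (rule wequiv.cancel) (use wpath_appendI[OF cancel.prems cancel.hyps] in simp)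
  then show ?case by simp
next
  case (rel r q a u v' b)
  have "wequiv E s t R c b ((v @ u) @ r @ v') ((v @ u) @ q @ v')"
    by (rule wequiv.rel)
      (use rel.hyps wpath_appendI[OF rel.prems rel.hyps(2)] wpath_appendI[OF rel.prems rel.hyps(3)]
          in simp_all)
  then show ?case by simp
qed (auto intro: wequiv.intros wpath_appendI)

lemma wequiv_append:
  "wequiv E s t R a b w w' \<Longrightarrow> wequiv E s t R b c v v' \<Longrightarrow> wequiv E s t R a c (w @ v) (w' @ v')"
  by (meson wequiv.trans wequiv_append_left wequiv_append_right wequiv_wpath)

lemma winv_Nil [simp]: "winv [] = []"
  and winv_Cons [simp]: "winv ((e, d) # w) = winv w @ [(e, \<not> d)]"
  and winv_append [simp]: "winv (u @ v) = winv v @ winv u"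
  by (auto simp: winv_def)

lemma winv_winv [simp]: "winv (winv w) = w"
  by (induction w) auto

lemma wpath_winv: "wpath E s t a w b \<Longrightarrow> wpath E s t b (winv w) a"
proof (induction w arbitrary: a)
  case (Cons x w)
  then show ?case by (cases x) (auto simp: wpath_append split: if_splits)
qed simp

lemma wequiv_append_winv: "wpath E s t a w b \<Longrightarrow> wequiv E s t R a a (w @ winv w) []"
proof (induction w arbitrary: a)
  case Nil
  then show ?case by (auto intro: wequiv.refl)
next
  case (Cons x w)
  obtain e d where x: "x = (e, d)" by (cases x)
  define c where "c = (if d then t e else s e)"
  have p1: "wpath E s t a [(e, d)] c" and p2: "wpath E s t c [(e, \<not> d)] a" and wc: "wpath E s t c w b"
    using Cons.prems by (auto simp: x c_def split: if_splits)
  have "wequiv E s t R a a ([(e, d)] @ (w @ winv w) @ [(e, \<not> d)]) ([(e, d)] @ [] @ [(e, \<not> d)])"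
    using Cons.IH[OF wc] p1 p2 by (intro wequiv_append wequiv.refl) auto
  moreover have "wequiv E s t R a a ([] @ [(e, d), (e, \<not> d)] @ []) ([] @ [])"
    by (rule wequiv.cancel) (use wpath_appendI[OF p1 p2] in simp)
  ultimately show ?case unfolding x by (auto intro: wequiv.trans)
qed

lemma wequiv_winv_append: "wpath E s t a w b \<Longrightarrow> wequiv E s t R b b (winv w @ w) []"
  using wequiv_append_winv[OF wpath_winv, of E s t a w b R] by simp

lemma wclass_mem: "wpath E s t a w b \<Longrightarrow> w \<in> wclass E s t R a b w"
  by (auto simp: wclass_def intro: wequiv.refl)

lemma wclass_eq_iff:
  "wpath E s t a w b \<Longrightarrow> wclass E s t R a b w = wclass E s t R a b w' \<longleftrightarrow> wequiv E s t R a b w w'"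
  unfolding wclass_def by (blast intro: wequiv.refl wequiv.sym wequiv.trans)

lemma wclass_eqI: "wequiv E s t R a b w w' \<Longrightarrow> wclass E s t R a b w = wclass E s t R a b w'"
  using wclass_eq_iff wequiv_wpath by metis

lemma wequiv_some_wclass:
  "wpath E s t a w b \<Longrightarrow> wequiv E s t R a b w (SOME w'. w' \<in> wclass E s t R a b w)"
  using someI[of "\<lambda>w'. w' \<in> wclass E s t R a b w", OF wclass_mem] unfolding wclass_def by auto

locale presentation =
  fixes V :: "'v set" and E :: "'e set" and s t :: "'e \<Rightarrow> 'v" and R :: "('e word \<times> 'e word) set"
begin

abbreviation "PG \<equiv> pres_gpd V E s t R"
abbreviation "cls \<equiv> wclass E s t R"
abbreviation "wp \<equiv> wpath E s t"
abbreviation "weq \<equiv> wequiv E s t R"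

lemma pres_gpd_simps [simp]: "Obj PG = V" "Dom PG (a, b, W) = a" "Cod PG (a, b, W) = b"
  "Idt PG a = (a, a, cls a a [])"
  by (auto simp: pres_gpd_def)

lemma pres_arrI: "a \<in> V \<Longrightarrow> b \<in> V \<Longrightarrow> wp a w b \<Longrightarrow> (a, b, cls a b w) \<in> Arr PG"
  by (auto simp: pres_gpd_def)

lemma pres_arrE:
  assumes "x \<in> Arr PG"
  obtains a b w where "x = (a, b, cls a b w)" "a \<in> V" "b \<in> V" "wp a w b"
  using assms by (auto simp: pres_gpd_def)

lemma pres_comp: "wp a w1 b \<Longrightarrow> wp b w2 c \<Longrightarrow>
    Comp PG (b, c, cls b c w2) (a, b, cls a b w1) = (a, c, cls a c (w1 @ w2))"
  unfolding pres_gpd_def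
  by (auto intro!: wclass_eqI wequiv_append wequiv.sym[OF wequiv_some_wclass])

lemma groupoid_pres_gpd: "groupoid PG"
  unfolding groupoid_def
proof (intro conjI ballI impI)
  fix f assume "f \<in> Arr PG"
  then obtain a b w where f: "f = (a, b, cls a b w)" "a \<in> V" "b \<in> V" "wp a w b"
    by (rule pres_arrE)
  show "Dom PG f \<in> Obj PG" "Cod PG f \<in> Obj PG" using f by auto
  show "Comp PG f (Idt PG (Dom PG f)) = f" "Comp PG (Idt PG (Cod PG f)) f = f"
    using f pres_comp[of a "[]" a w b] pres_comp[of a w b "[]" b] by simp_all
  have wi: "wp b (winv w) a" using f wpath_winv by metis
  show "\<exists>g\<in>Arr PG. Dom PG g = Cod PG f \<and> Cod PG g = Dom PG f \<and>
      Comp PG g f = Idt PG (Dom PG f) \<and> Comp PG f g = Idt PG (Cod PG f)"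
    using f wi pres_comp[of a w b "winv w" a] pres_comp[of b "winv w" a w b]
      wclass_eqI[OF wequiv_append_winv[OF f(4)]] wclass_eqI[OF wequiv_winv_append[OF f(4)]]
    by (intro bexI[of _ "(b, a, cls b a (winv w))"] conjI pres_arrI) auto
next
  fix f g assume "f \<in> Arr PG" "g \<in> Arr PG" "Cod PG f = Dom PG g"
  then obtain a b w c v where f: "f = (a, b, cls a b w)" "a \<in> V" "b \<in> V" "wp a w b"
    and g: "g = (b, c, cls b c v)" "c \<in> V" "wp b v c"
    by (metis pres_arrE pres_gpd_simps(2,3))
  show "Comp PG g f \<in> Arr PG" "Dom PG (Comp PG g f) = Dom PG f" "Cod PG (Comp PG g f) = Cod PG g"
    using f g pres_comp[of a w b v c] by (auto intro!: pres_arrI wpath_appendI)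
  fix h assume "h \<in> Arr PG" "Cod PG g = Dom PG h"
  then obtain d u where h: "h = (c, d, cls c d u)" "wp c u d"
    using g by (metis pres_arrE pres_gpd_simps(2,3))
  show "Comp PG h (Comp PG g f) = Comp PG (Comp PG h g) f"
    using f g h pres_comp[of a w b v c] pres_comp[of a "w @ v" c u d] pres_comp[of b v c u d]
      pres_comp[of a w b "v @ u" d] wpath_appendI[OF f(4) g(3)] wpath_appendI[OF g(3) h(2)]
    by simp
next
  fix a assume "a \<in> Obj PG"
  then show "Idt PG a \<in> Arr PG" "Dom PG (Idt PG a) = a" "Cod PG (Idt PG a) = a"
    by (auto intro: pres_arrI)
qed

sublocale PG: small_groupoid PG
  by (rule small_groupoid.intro[OF groupoid_pres_gpd])

lemma pres_ginv: "a \<in> V \<Longrightarrow> b \<in> V \<Longrightarrow> wp a w b \<Longrightarrow> PG.ginv (a, b, cls a b w) = (b, a, cls b a (winv w))"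
  using pres_comp[of a w b "winv w" a] wclass_eqI[OF wequiv_append_winv, of E s t a w b R]
  by (intro PG.ginv_unique) (auto intro!: pres_arrI wpath_winv)

definition gen :: "'e \<Rightarrow> 'v \<times> 'v \<times> 'e word set" where
  "gen e = (s e, t e, cls (s e) (t e) [(e, True)])"

lemma gen_arr: "e \<in> E \<Longrightarrow> s e \<in> V \<Longrightarrow> t e \<in> V \<Longrightarrow> gen e \<in> Arr PG"
  unfolding gen_def by (rule pres_arrI) auto

end

fun weval :: "('p, 'n) gpd \<Rightarrow> ('e \<Rightarrow> 'v) \<Rightarrow> ('e \<Rightarrow> 'v) \<Rightarrow> ('v \<Rightarrow> 'p) \<Rightarrow> ('e \<Rightarrow> 'n) \<Rightarrow> 'v \<Rightarrow> 'e word \<Rightarrow> 'n" where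
  "weval H s t ho hg a [] = Idt H (ho a)"
| "weval H s t ho hg a ((e, d) # w) =
     (if d then Comp H (weval H s t ho hg (t e) w) (hg e)
      else Comp H (weval H s t ho hg (s e) w) (small_groupoid.ginv H (hg e)))"

locale presentation_interp = presentation V E s t R
  for V :: "'v set" and E :: "'e set" and s t :: "'e \<Rightarrow> 'v" and R :: "('e word \<times> 'e word) set" +
  fixes H :: "('p, 'n) gpd" and ho :: "'v \<Rightarrow> 'p" and hg :: "'e \<Rightarrow> 'n"
  assumes groupoid_target: "groupoid H"
    and st: "\<And>e. e \<in> E \<Longrightarrow> s e \<in> V \<and> t e \<in> V"
    and ho: "\<And>a. a \<in> V \<Longrightarrow> ho a \<in> Obj H"
    and hg: "\<And>e. e \<in> E \<Longrightarrow> hg e \<in> Arr H \<and> Dom H (hg e) = ho (s e) \<and> Cod H (hg e) = ho (t e)"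
    and respects_relations: "\<And>r q a b. (r, q) \<in> R \<Longrightarrow> a \<in> V \<Longrightarrow> wpath E s t a r b \<Longrightarrow> wpath E s t a q b \<Longrightarrow>
         weval H s t ho hg a r = weval H s t ho hg a q"
begin

sublocale H: small_groupoid H by (rule small_groupoid.intro[OF groupoid_target])

abbreviation "ev \<equiv> weval H s t ho hg"

lemma wp_closed: "wp a w b \<Longrightarrow> a \<in> V \<Longrightarrow> b \<in> V"
  using wpath_closed[where V = V] st by blast

lemma ev_arr:
  "wp a w b \<Longrightarrow> a \<in> V \<Longrightarrow> ev a w \<in> Arr H \<and> Dom H (ev a w) = ho a \<and> Cod H (ev a w) = ho b"
proof (induction w arbitrary: a)
  case (Cons x w)
  then show ?case using st hg by (cases x) (auto split: if_splits)
qed (simp add: ho)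

lemma ev_append: "wp a u c \<Longrightarrow> wp c v b \<Longrightarrow> a \<in> V \<Longrightarrow> ev a (u @ v) = Comp H (ev c v) (ev a u)"
proof (induction u arbitrary: a)
  case Nil
  then show ?case using ev_arr[of c v b] by simp
next
  case (Cons x u)
  obtain e d where x: "x = (e, d)" by (cases x)
  define a' where "a' = (if d then t e else s e)"
  define g where "g = (if d then hg e else H.ginv (hg e))"
  have e: "e \<in> E" and u: "wp a' u c" and ev: "ev a (x # w) = Comp H (ev a' w) g" for w
    using Cons.prems by (auto simp: x a'_def g_def split: if_splits)
  have V: "a' \<in> V" "c \<in> V" using st e u wp_closed by (auto simp: a'_def)
  have "g \<in> Arr H" "Cod H g = ho a'" using hg[OF e] by (auto simp: g_def a'_def)
  then show ?case
    using Cons.IH[OF u Cons.prems(2) V(1)] ev_arr[OF u V(1)] ev_arr[OF Cons.prems(2) V(2)]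
    by (simp add: ev H.comp_assoc)
qed

lemma ev_cancel: "wp a [(e, d), (e, \<not> d)] a' \<Longrightarrow> ev a [(e, d), (e, \<not> d)] = Idt H (ho a)"
  using hg st ho by (cases d) auto

lemma ev_wequiv: "weq a b w w' \<Longrightarrow> a \<in> V \<Longrightarrow> ev a w = ev a w'"
proof (induction rule: wequiv.induct)
  case (cancel a u e d v b)
  then obtain c where p: "wp a u c" "wp c [(e, d), (e, \<not> d)] c" "wp c v b"
    by (auto simp: wpath_append split: if_splits)
  have V: "c \<in> V" using wp_closed p cancel by auto
  show ?case
    using ev_append[OF p(1) wpath_appendI[OF p(2,3)] cancel.prems] ev_append[OF p(2,3) V]
      ev_cancel[OF p(2)] ev_arr[OF p(3) V] ev_append[OF p(1,3) cancel.prems]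
    by simp
next
  case (rel r q a u v b)
  obtain c c' where p: "wp a u c" "wp c r c'" "wp c' v b"
    using rel.hyps(2) by (metis wpath_append)
  moreover obtain d d' where "wp a u d" "wp d q d'" "wp d' v b"
    using rel.hyps(3) by (metis wpath_append)
  ultimately have q: "wp c q c'"
    by (metis wpath_target_unique wpath_source_unique wpath.simps(1))
  have V: "c \<in> V" using wp_closed p rel by auto
  show ?case
    using ev_append[OF p(1) wpath_appendI[OF p(2,3)] rel.prems] ev_append[OF p(2,3) V]
      respects_relations[OF rel.hyps(1) V p(2) q] ev_append[OF q p(3) V]
      ev_append[OF p(1) wpath_appendI[OF q p(3)] rel.prems]
    by simp
qed auto

definition induced_arr :: "'v \<times> 'v \<times> 'e word set \<Rightarrow> 'n" where
  "induced_arr = (\<lambda>(a, b, W). ev a (SOME w. w \<in> W))"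

lemma induced_arr_wclass: "a \<in> V \<Longrightarrow> wp a w b \<Longrightarrow> induced_arr (a, b, cls a b w) = ev a w"
  unfolding induced_arr_def using ev_wequiv[OF wequiv.sym[OF wequiv_some_wclass]] by simp

lemma induced_functor: "gfunctor PG H ho induced_arr"
  unfolding gfunctor_def
proof (intro conjI ballI impI)
  fix f assume "f \<in> Arr PG"
  then obtain a b w where f: "f = (a, b, cls a b w)" "a \<in> V" "b \<in> V" "wp a w b"
    by (rule pres_arrE)
  show "induced_arr f \<in> Arr H" "Dom H (induced_arr f) = ho (Dom PG f)"
    "Cod H (induced_arr f) = ho (Cod PG f)"
    using f induced_arr_wclass ev_arr by auto
  fix g assume "g \<in> Arr PG" "Cod PG f = Dom PG g"
  then obtain c v where g: "g = (b, c, cls b c v)" "wp b v c"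
    using f by (metis pres_arrE pres_gpd_simps(2,3))
  show "induced_arr (Comp PG g f) = Comp H (induced_arr g) (induced_arr f)"
    using f g pres_comp[of a w b v c] induced_arr_wclass[OF f(2) wpath_appendI[OF f(4) g(2)]]
      induced_arr_wclass ev_append[OF f(4) g(2) f(2)]
    by simp
qed (use ho induced_arr_wclass[of _ "[]"] in auto)

lemma induced_arr_gen: "e \<in> E \<Longrightarrow> induced_arr (gen e) = hg e"
  unfolding gen_def using st hg by (subst induced_arr_wclass) auto

end

lemma (in presentation) pres_letter:
  assumes "e \<in> E" "s e \<in> V" "t e \<in> V"
  shows "(if d then gen e else PG.ginv (gen e)) =
    (if d then s e else t e, if d then t e else s e,
     cls (if d then s e else t e) (if d then t e else s e) [(e, d)])"
  using assms pres_ginv[of "s e" "t e" "[(e, True)]"] by (simp add: gen_def winv_def)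

context presentation
begin

context
  fixes H :: "('p, 'n) gpd" and f1o f2o :: "'v \<Rightarrow> 'p" and f1m f2m eta
  assumes st: "\<And>e. e \<in> E \<Longrightarrow> s e \<in> V \<and> t e \<in> V"
    and H: "groupoid H"
    and F1: "gfunctor PG H f1o f1m" and F2: "gfunctor PG H f2o f2m"
    and eta: "\<And>a. a \<in> V \<Longrightarrow> eta a \<in> Arr H \<and> Dom H (eta a) = f1o a \<and> Cod H (eta a) = f2o a"
    and nat: "\<And>e. e \<in> E \<Longrightarrow> Comp H (eta (t e)) (f1m (gen e)) = Comp H (f2m (gen e)) (eta (s e))"
begin

lemma naturality_letter:
  assumes "wp a [(e, d)] c"
  shows "Comp H (eta c) (f1m (a, c, cls a c [(e, d)])) = Comp H (f2m (a, c, cls a c [(e, d)])) (eta a)"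
proof -
  interpret H: small_groupoid H by (rule small_groupoid.intro[OF H])
  have e: "e \<in> E" and V: "s e \<in> V" "t e \<in> V" using assms st by auto
  have gen: "gen e \<in> Arr PG" using gen_arr e V by auto
  have "Comp H (eta c) (f1m (if d then gen e else PG.ginv (gen e))) =
      Comp H (f2m (if d then gen e else PG.ginv (gen e))) (eta a)"
  proof (cases d)
    case True
    then show ?thesis using nat[OF e] assms by simp
  next
    case False
    have "Comp H (eta (s e)) (H.ginv (f1m (gen e))) = Comp H (H.ginv (f2m (gen e))) (eta (t e))"
      using gen gfunctorD[OF F1] gfunctorD[OF F2] eta V nat[OF e] unfolding gen_def
      by (intro H.naturality_ginv) auto
    then show ?thesis
      using False assms gfunctor_ginv[OF groupoid_pres_gpd H F1 gen]
          gfunctor_ginv[OF groupoid_pres_gpd H F2 gen]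
      by simp
  qed
  moreover have "a = (if d then s e else t e)" "c = (if d then t e else s e)"
    using assms by (auto split: if_splits)
  ultimately show ?thesis using pres_letter[OF e V, of d] by simp
qed

lemma naturality_wpath:
  "wp a w b \<Longrightarrow> a \<in> V \<Longrightarrow> Comp H (eta b) (f1m (a, b, cls a b w)) = Comp H (f2m (a, b, cls a b w)) (eta a)"
proof (induction w arbitrary: a)
  interpret H: small_groupoid H by (rule small_groupoid.intro[OF H])
  case Nil
  then show ?case using gfunctorD(5)[OF F1, of a] gfunctorD(5)[OF F2, of a] eta[of a] by simp
next
  interpret H: small_groupoid H by (rule small_groupoid.intro[OF H])
  case (Cons x w)
  note F1D = gfunctorD[OF F1] and F2D = gfunctorD[OF F2]
  obtain e d where ed: "x = (e, d)" by (cases x)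
  obtain c where x: "wp a [x] c" and w: "wp c w b"
    using Cons.prems(1) wpath_append[of E s t a "[x]" w b] by auto
  have closed: "wp a' u b' \<Longrightarrow> a' \<in> V \<Longrightarrow> b' \<in> V" for a' u b'
    using wpath_closed[where V = V] st by blast
  have V: "c \<in> V" "b \<in> V" using closed x w Cons.prems(2) by blast+
  have arr: "(a, c, cls a c [x]) \<in> Arr PG" "(c, b, cls c b w) \<in> Arr PG"
    using x w V Cons.prems(2) by (auto intro!: pres_arrI)
  have "Comp H (eta b) (Comp H (f1m (c, b, cls c b w)) (f1m (a, c, cls a c [x]))) =
      Comp H (Comp H (f2m (c, b, cls c b w)) (f2m (a, c, cls a c [x]))) (eta a)"
    by (rule H.naturality_comp[OF _ _ _ _ _ _ _ _ _ _ _ _ _ naturality_letter[OF x[unfolded ed]]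
          Cons.IH[OF w V(1)], unfolded ed[symmetric]])
      (use F1D F2D arr eta V Cons.prems in auto)
  then show ?case
    using pres_comp[OF x w] F1D(6)[OF arr(1,2)] F2D(6)[OF arr(1,2)] by simp
qed

lemma nat_iso_from_generators: "nat_iso PG H f1o f1m f2o f2m eta"
  unfolding nat_iso_def
proof (intro conjI ballI)
  interpret H: small_groupoid H by (rule small_groupoid.intro[OF H])
  fix a assume a: "a \<in> Obj PG"
  show "eta a \<in> Arr H" "Dom H (eta a) = f1o a" "Cod H (eta a) = f2o a" using eta a by auto
  show "\<exists>g\<in>Arr H. Dom H g = f2o a \<and> Cod H g = f1o a \<and>
      Comp H g (eta a) = Idt H (f1o a) \<and> Comp H (eta a) g = Idt H (f2o a)"
    using eta[of a] a by (intro bexI[of _ "H.ginv (eta a)"]) auto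
next
  fix f assume "f \<in> Arr PG"
  then obtain a b w where "f = (a, b, cls a b w)" "a \<in> V" "wp a w b" by (rule pres_arrE)
  then show "Comp H (eta (Cod PG f)) (f1m f) = Comp H (f2m f) (eta (Dom PG f))"
    using naturality_wpath by simp
qed

end

end

lemma wlift_Nil [simp]: "wlift h [] = []"
  and wlift_Cons [simp]: "wlift h ((e, d) # w) = (if d then h e else winv (h e)) @ wlift h w"
  by (auto simp: wlift_def)

lemma weval_pres_gpd_wlift:
  assumes h: "\<And>e. e \<in> E \<Longrightarrow> ho (s e) \<in> V' \<and> ho (t e) \<in> V' \<and> wpath E' s' t' (ho (s e)) (h e) (ho (t e))"
    and "wpath E s t a w b" "ho a \<in> V'"
  shows "wpath E' s' t' (ho a) (wlift h w) (ho b) \<and>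
    weval (pres_gpd V' E' s' t' R') s t ho
      (\<lambda>e. (ho (s e), ho (t e), wclass E' s' t' R' (ho (s e)) (ho (t e)) (h e))) a w =
    (ho a, ho b, wclass E' s' t' R' (ho a) (ho b) (wlift h w))"
  using assms(2,3)
proof (induction w arbitrary: a)
  case (Cons x w)
  interpret T: presentation V' E' s' t' R' .
  obtain e d where x: "x = (e, d)" by (cases x)
  show ?case
  proof (cases d)
    case True
    then have *: "e \<in> E" "s e = a" "wpath E s t (t e) w b" using Cons.prems by (auto simp: x)
    then show ?thesis
      using Cons.IH[OF *(3)] h[OF *(1)] True x
        T.pres_comp[of "ho (s e)" "h e" "ho (t e)" "wlift h w" "ho b"]
      by (auto intro: wpath_appendI)
  next
    case False
    then have *: "e \<in> E" "t e = a" "wpath E s t (s e) w b" using Cons.prems by (auto simp: x)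
    then show ?thesis
      using Cons.IH[OF *(3)] h[OF *(1)] False x T.pres_ginv[of "ho (s e)" "ho (t e)" "h e"]
        T.pres_comp[of "ho (t e)" "winv (h e)" "ho (s e)" "wlift h w" "ho b"] wpath_winv
      by (auto intro: wpath_appendI wpath_winv)
  qed
qed (simp add: pres_gpd_def)

section \<open>The comparison functor\<close>

type_synonym ('o, 'm) colim_arr =
  "(nat set \<times> 'o) set \<times> (nat set \<times> 'o) set \<times> (nat set \<times> 'm) word set"

type_synonym ('o, 'm) twocolim_arr =
  "(nat set \<times> 'o) \<times> (nat set \<times> 'o) \<times> (nat set \<times> 'o \<times> nat set \<times> 'm) word set"

lemma obj_rel_induct:
  assumes "(p, q) \<in> obj_rel P Phi Fo" "Q p"
    and "\<And>X Y x. X \<in> P \<Longrightarrow> Y \<in> P \<Longrightarrow> X \<subseteq> Y \<Longrightarrow> x \<in> Obj (Phi X) \<Longrightarrow> Q (X, x) \<longleftrightarrow> Q (Y, Fo X Y x)"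
  shows "Q q"
  using assms(1,2) unfolding obj_rel_def Let_def
proof (induction rule: rtrancl_induct)
  case (step y z)
  then show ?case using assms(3) by blast
qed

locale diagram =
  fixes P :: "nat set set" and Phi :: "nat set \<Rightarrow> ('o, 'm) gpd"
    and Fo :: "nat set \<Rightarrow> nat set \<Rightarrow> 'o \<Rightarrow> 'o" and Fm :: "nat set \<Rightarrow> nat set \<Rightarrow> 'm \<Rightarrow> 'm"
  assumes gpd_diagram: "gpd_diagram P Phi Fo Fm"
begin

abbreviation "TO \<equiv> tot_obj P Phi"
abbreviation "OR \<equiv> obj_rel P Phi Fo"
abbreviation "CV \<equiv> colim_V P Phi Fo"
abbreviation "CE \<equiv> colim_E P Phi"
abbreviation "Cs \<equiv> colim_s P Phi Fo"
abbreviation "Ct \<equiv> colim_t P Phi Fo"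
abbreviation "CR \<equiv> colim_R P Phi Fm"
abbreviation "C \<equiv> colim P Phi Fo Fm"
abbreviation "TE \<equiv> groth_E P Phi Fo"
abbreviation "Ts \<equiv> groth_s"
abbreviation "Tt \<equiv> groth_t Phi"
abbreviation "TR \<equiv> groth_R P Phi Fo Fm"
abbreviation "T \<equiv> twocolim P Phi Fo Fm"
abbreviation "dobj \<equiv> delta_obj P Phi Fo"
abbreviation "darr \<equiv> delta_arr P Phi Fo Fm"

lemma groupoid_Phi: "X \<in> P \<Longrightarrow> groupoid (Phi X)"
  and gfunctor_Fo: "X \<in> P \<Longrightarrow> Y \<in> P \<Longrightarrow> X \<subseteq> Y \<Longrightarrow> gfunctor (Phi X) (Phi Y) (Fo X Y) (Fm X Y)"
  and Fo_id [simp]: "X \<in> P \<Longrightarrow> a \<in> Obj (Phi X) \<Longrightarrow> Fo X X a = a"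
  and Fm_id [simp]: "X \<in> P \<Longrightarrow> f \<in> Arr (Phi X) \<Longrightarrow> Fm X X f = f"
  and Fo_comp: "X \<in> P \<Longrightarrow> Y \<in> P \<Longrightarrow> Z \<in> P \<Longrightarrow> X \<subseteq> Y \<Longrightarrow> Y \<subseteq> Z \<Longrightarrow>
    a \<in> Obj (Phi X) \<Longrightarrow> Fo Y Z (Fo X Y a) = Fo X Z a"
  using gpd_diagram unfolding gpd_diagram_def by simp_all

lemma Fo_obj: "X \<in> P \<Longrightarrow> Y \<in> P \<Longrightarrow> X \<subseteq> Y \<Longrightarrow> a \<in> Obj (Phi X) \<Longrightarrow> Fo X Y a \<in> Obj (Phi Y)"
  and Fm_arr: "X \<in> P \<Longrightarrow> Y \<in> P \<Longrightarrow> X \<subseteq> Y \<Longrightarrow> f \<in> Arr (Phi X) \<Longrightarrow> Fm X Y f \<in> Arr (Phi Y)"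
  and dom_Fm: "X \<in> P \<Longrightarrow> Y \<in> P \<Longrightarrow> X \<subseteq> Y \<Longrightarrow> f \<in> Arr (Phi X) \<Longrightarrow>
    Dom (Phi Y) (Fm X Y f) = Fo X Y (Dom (Phi X) f)"
  and cod_Fm: "X \<in> P \<Longrightarrow> Y \<in> P \<Longrightarrow> X \<subseteq> Y \<Longrightarrow> f \<in> Arr (Phi X) \<Longrightarrow>
    Cod (Phi Y) (Fm X Y f) = Fo X Y (Cod (Phi X) f)"
  and Fm_idt: "X \<in> P \<Longrightarrow> Y \<in> P \<Longrightarrow> X \<subseteq> Y \<Longrightarrow> a \<in> Obj (Phi X) \<Longrightarrow>
    Fm X Y (Idt (Phi X) a) = Idt (Phi Y) (Fo X Y a)"
  by (simp_all add: gfunctorD[OF gfunctor_Fo])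

lemma Phi_dom [simp]: "X \<in> P \<Longrightarrow> f \<in> Arr (Phi X) \<Longrightarrow> Dom (Phi X) f \<in> Obj (Phi X)"
  and Phi_cod [simp]: "X \<in> P \<Longrightarrow> f \<in> Arr (Phi X) \<Longrightarrow> Cod (Phi X) f \<in> Obj (Phi X)"
  and Phi_idt [simp]: "X \<in> P \<Longrightarrow> a \<in> Obj (Phi X) \<Longrightarrow> Idt (Phi X) a \<in> Arr (Phi X)"
  and Phi_dom_idt [simp]: "X \<in> P \<Longrightarrow> a \<in> Obj (Phi X) \<Longrightarrow> Dom (Phi X) (Idt (Phi X) a) = a"
  and Phi_cod_idt [simp]: "X \<in> P \<Longrightarrow> a \<in> Obj (Phi X) \<Longrightarrow> Cod (Phi X) (Idt (Phi X) a) = a"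
  and Phi_comp [simp]: "X \<in> P \<Longrightarrow> f \<in> Arr (Phi X) \<Longrightarrow> g \<in> Arr (Phi X) \<Longrightarrow>
    Cod (Phi X) f = Dom (Phi X) g \<Longrightarrow> Comp (Phi X) g f \<in> Arr (Phi X)"
  and Phi_dom_comp [simp]: "X \<in> P \<Longrightarrow> f \<in> Arr (Phi X) \<Longrightarrow> g \<in> Arr (Phi X) \<Longrightarrow>
    Cod (Phi X) f = Dom (Phi X) g \<Longrightarrow> Dom (Phi X) (Comp (Phi X) g f) = Dom (Phi X) f"
  and Phi_cod_comp [simp]: "X \<in> P \<Longrightarrow> f \<in> Arr (Phi X) \<Longrightarrow> g \<in> Arr (Phi X) \<Longrightarrow>
    Cod (Phi X) f = Dom (Phi X) g \<Longrightarrow> Cod (Phi X) (Comp (Phi X) g f) = Cod (Phi X) g"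
  and Phi_idt_comp [simp]: "X \<in> P \<Longrightarrow> f \<in> Arr (Phi X) \<Longrightarrow> Cod (Phi X) f = a \<Longrightarrow>
    Comp (Phi X) (Idt (Phi X) a) f = f"
  and Phi_comp_idt [simp]: "X \<in> P \<Longrightarrow> f \<in> Arr (Phi X) \<Longrightarrow> Dom (Phi X) f = a \<Longrightarrow>
    Comp (Phi X) f (Idt (Phi X) a) = f"
  using groupoid_Phi[of X] unfolding groupoid_def by auto

definition tot_le :: "nat set \<times> 'o \<Rightarrow> nat set \<times> 'o \<Rightarrow> bool" where
  "tot_le q q' \<longleftrightarrow> q \<in> TO \<and> q' \<in> TO \<and> fst q \<subseteq> fst q' \<and> snd q' = Fo (fst q) (fst q') (snd q)"

lemma tot_obj_iff [simp]: "(X, x) \<in> TO \<longleftrightarrow> X \<in> P \<and> x \<in> Obj (Phi X)"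
  by (simp add: tot_obj_def)

lemma tot_le_iff: "tot_le (X, x) (Y, y) \<longleftrightarrow> X \<in> P \<and> Y \<in> P \<and> x \<in> Obj (Phi X) \<and> X \<subseteq> Y \<and> y = Fo X Y x"
  unfolding tot_le_def using Fo_obj by auto

lemma tot_le_tot_obj: "tot_le p q \<Longrightarrow> p \<in> TO" "tot_le p q \<Longrightarrow> q \<in> TO"
  by (auto simp: tot_le_def)

lemma obj_rel_eq: "OR = ({(p, q). tot_le p q} \<union> {(p, q). tot_le p q}\<inverse>)\<^sup>*"
proof -
  have "{((X, x), (Y, Fo X Y x)) | X Y x. X \<in> P \<and> Y \<in> P \<and> X \<subseteq> Y \<and> x \<in> Obj (Phi X)} =
      {(p, q). tot_le p q}"
    by (auto simp: tot_le_def Fo_obj)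
  then show ?thesis unfolding obj_rel_def Let_def by simp
qed

lemma obj_rel_tot_le: "tot_le p q \<Longrightarrow> (p, q) \<in> OR"
  unfolding obj_rel_eq by auto

lemma dobj_eq_iff: "dobj p = dobj q \<longleftrightarrow> (p, q) \<in> OR"
proof -
  have "equiv UNIV OR"
    unfolding obj_rel_eq
      by (intro equivI refl_rtrancl sym_rtrancl trans_rtrancl) (auto simp: sym_Un_converse)
  then show ?thesis unfolding delta_obj_def by (simp add: equiv_class_eq_iff)
qed

lemma dobj_Fo: "X \<in> P \<Longrightarrow> Y \<in> P \<Longrightarrow> X \<subseteq> Y \<Longrightarrow> x \<in> Obj (Phi X) \<Longrightarrow> dobj (Y, Fo X Y x) = dobj (X, x)"
  using dobj_eq_iff obj_rel_tot_le by (metis tot_le_iff)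

lemma dobj_tot_le: "tot_le p q \<Longrightarrow> dobj q = dobj p"
  by (cases p, cases q) (auto simp: tot_le_iff dobj_Fo)

lemma dobj_colim_V: "p \<in> TO \<Longrightarrow> dobj p \<in> CV"
  unfolding delta_obj_def colim_V_def by (auto intro: quotientI)

lemma colim_V_dobj: "c \<in> CV \<Longrightarrow> \<exists>p\<in>TO. c = dobj p"
  unfolding delta_obj_def colim_V_def by (auto elim: quotientE)

lemma mem_dobj: "q \<in> dobj p \<longleftrightarrow> (p, q) \<in> OR"
  by (simp add: delta_obj_def)

lemma colim_eq: "C = pres_gpd CV CE Cs Ct CR"
  by (simp add: colim_def)

lemma twocolim_eq: "T = pres_gpd TO TE Ts Tt TR"
  by (simp add: twocolim_def)

lemma groupoid_colim: "groupoid C"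
  unfolding colim_eq by (rule presentation.groupoid_pres_gpd)

lemma groupoid_twocolim: "groupoid T"
  unfolding twocolim_eq by (rule presentation.groupoid_pres_gpd)

sublocale CG: small_groupoid C by (rule small_groupoid.intro[OF groupoid_colim])
sublocale TG: small_groupoid T by (rule small_groupoid.intro[OF groupoid_twocolim])

lemma colim_obj [simp]: "Obj C = CV"
  and twocolim_obj [simp]: "Obj T = TO"
  by (simp_all add: colim_eq twocolim_eq pres_gpd_def)

lemma colim_E_iff [simp]: "(X, f) \<in> CE \<longleftrightarrow> X \<in> P \<and> f \<in> Arr (Phi X)"
  by (simp add: colim_E_def)

lemma colim_s_simp [simp]: "Cs (X, f) = dobj (X, Dom (Phi X) f)"
  by (simp add: colim_s_def delta_obj_def)

lemma colim_t_simp [simp]: "Ct (X, f) = dobj (X, Cod (Phi X) f)"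
  by (simp add: colim_t_def delta_obj_def)

lemma groth_E_iff [simp]: "(X, x, Y, f) \<in> TE \<longleftrightarrow> X \<in> P \<and> Y \<in> P \<and> X \<subseteq> Y \<and> x \<in> Obj (Phi X) \<and>
    f \<in> Arr (Phi Y) \<and> Dom (Phi Y) f = Fo X Y x"
  by (simp add: groth_E_def)

lemma groth_s_simp [simp]: "Ts (X, x, Y, f) = (X, x)"
  by (simp add: groth_s_def)

lemma groth_t_simp [simp]: "Tt (X, x, Y, f) = (Y, Cod (Phi Y) f)"
  by (simp add: groth_t_def)

lemma colim_st: "e \<in> CE \<Longrightarrow> Cs e \<in> CV \<and> Ct e \<in> CV"
  by (cases e) (auto intro!: dobj_colim_V)

lemma groth_st: "e \<in> TE \<Longrightarrow> Ts e \<in> TO \<and> Tt e \<in> TO"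
  by (cases e) auto

abbreviation "Ccls \<equiv> wclass CE Cs Ct CR"
abbreviation "Tcls \<equiv> wclass TE Ts Tt TR"
abbreviation "Cwp \<equiv> wpath CE Cs Ct"
abbreviation "Twp \<equiv> wpath TE Ts Tt"
abbreviation "Cgen \<equiv> presentation.gen CE Cs Ct CR"
abbreviation "Tgen \<equiv> presentation.gen TE Ts Tt TR"

lemma Cgen_eq: "Cgen e = (Cs e, Ct e, Ccls (Cs e) (Ct e) [(e, True)])"
  by (simp add: presentation.gen_def)

lemma Tgen_eq: "Tgen e = (Ts e, Tt e, Tcls (Ts e) (Tt e) [(e, True)])"
  by (simp add: presentation.gen_def)

lemma Cgen_arr: "e \<in> CE \<Longrightarrow> Cgen e \<in> Arr C" "Dom C (Cgen e) = Cs e" "Cod C (Cgen e) = Ct e"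
proof -
  assume e: "e \<in> CE"
  show "Cgen e \<in> Arr C" unfolding colim_eq Cgen_eq
    by (rule presentation.pres_arrI) (use colim_st[OF e] e in auto)
qed (auto simp: Cgen_eq colim_eq pres_gpd_def)

lemma Tgen_arr: "e \<in> TE \<Longrightarrow> Tgen e \<in> Arr T" "Dom T (Tgen e) = Ts e" "Cod T (Tgen e) = Tt e"
proof -
  assume e: "e \<in> TE"
  show "Tgen e \<in> Arr T" unfolding twocolim_eq Tgen_eq
    by (rule presentation.pres_arrI) (use groth_st[OF e] e in auto)
qed (auto simp: Tgen_eq twocolim_eq pres_gpd_def)

lemma Tgen_comp:
  assumes e1: "(X, x, Y, f) \<in> TE" and e2: "(Y, Cod (Phi Y) f, Z, g) \<in> TE"
  shows "Comp T (Tgen (Y, Cod (Phi Y) f, Z, g)) (Tgen (X, x, Y, f)) =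
    Tgen (X, x, Z, Comp (Phi Z) g (Fm Y Z f))"
proof -
  let ?e1 = "(X, x, Y, f)" and ?e2 = "(Y, Cod (Phi Y) f, Z, g)"
      and ?e3 = "(X, x, Z, Comp (Phi Z) g (Fm Y Z f))"
  have e3: "?e3 \<in> TE" and t3: "Tt ?e3 = Tt ?e2"
    using e1 e2 by (auto simp: Fm_arr dom_Fm cod_Fm Fo_comp)
  have "([(?e1, True), (?e2, True)], [(?e3, True)]) \<in> TR"
    unfolding groth_R_def by (rule UnI1) (use e1 e2 in \<open>intro CollectI exI conjI; simp only: refl\<close>)
  then have "wequiv TE Ts Tt TR (X, x) (Tt ?e2)
      ([] @ [(?e1, True), (?e2, True)] @ []) ([] @ [(?e3, True)] @ [])"
    by (rule wequiv.rel) (use e1 e2 e3 t3 in auto)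
  then show ?thesis
    using presentation.pres_comp[of TE Ts Tt "(X, x)" "[(?e1, True)]" "Tt ?e1" "[(?e2, True)]"
        "Tt ?e2" TO TR]
      e1 e2 t3 wclass_eqI
    by (simp add: Tgen_eq twocolim_eq)
qed

lemma Tgen_idt:
  assumes "X \<in> P" "x \<in> Obj (Phi X)"
  shows "Tgen (X, x, X, Idt (Phi X) x) = Idt T (X, x)"
proof -
  let ?e = "(X, x, X, Idt (Phi X) x)"
  have "([(?e, True)], []) \<in> TR"
    unfolding groth_R_def by (rule UnI2) (use assms in \<open>intro CollectI exI conjI; simp only: refl\<close>)
  then have "wequiv TE Ts Tt TR (X, x) (X, x) ([] @ [(?e, True)] @ []) ([] @ [] @ [])"
    by (rule wequiv.rel) (use assms in auto)
  then show ?thesis using assms wclass_eqI by (simp add: Tgen_eq twocolim_eq pres_gpd_def)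
qed

definition iota :: "nat set \<times> 'o \<Rightarrow> nat set \<times> 'o \<Rightarrow> ('o, 'm) twocolim_arr" where
  "iota p q = Tgen (fst p, snd p, fst q, Idt (Phi (fst q)) (snd q))"

definition inc :: "nat set \<Rightarrow> 'm \<Rightarrow> ('o, 'm) twocolim_arr" where
  "inc X f = Tgen (X, Dom (Phi X) f, X, f)"

lemma iota_arr: "tot_le p q \<Longrightarrow> iota p q \<in> Arr T"
  and dom_iota: "tot_le p q \<Longrightarrow> Dom T (iota p q) = p"
  and cod_iota: "tot_le p q \<Longrightarrow> Cod T (iota p q) = q"
  unfolding iota_def using Tgen_arr
  by (cases p, cases q, auto simp: tot_le_iff Fo_obj)+

lemma inc_arr: "X \<in> P \<Longrightarrow> f \<in> Arr (Phi X) \<Longrightarrow> inc X f \<in> Arr T"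
  and dom_inc: "X \<in> P \<Longrightarrow> f \<in> Arr (Phi X) \<Longrightarrow> Dom T (inc X f) = (X, Dom (Phi X) f)"
  and cod_inc: "X \<in> P \<Longrightarrow> f \<in> Arr (Phi X) \<Longrightarrow> Cod T (inc X f) = (X, Cod (Phi X) f)"
  unfolding inc_def using Tgen_arr by auto

lemmas iota_simps = iota_arr dom_iota cod_iota
lemmas inc_simps = inc_arr dom_inc cod_inc

lemma iota_comp: assumes "tot_le p q" "tot_le q r" shows "Comp T (iota q r) (iota p q) = iota p r"
proof -
  obtain X x Y y Z z where pqr: "p = (X, x)" "q = (Y, y)" "r = (Z, z)" by (cases p, cases q, cases r)
  have h: "X \<in> P" "Y \<in> P" "Z \<in> P" "X \<subseteq> Y" "Y \<subseteq> Z" "x \<in> Obj (Phi X)" "y = Fo X Y x" "z = Fo Y Z y"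
    using assms pqr by (auto simp: tot_le_iff)
  show ?thesis
    unfolding iota_def pqr using Tgen_comp[of X x Y "Idt (Phi Y) y" Z "Idt (Phi Z) z"] h
    by (simp add: Fo_obj Fm_idt Fo_comp)
qed

lemma iota_idt: "q \<in> TO \<Longrightarrow> iota q q = Idt T q"
  by (cases q) (simp add: iota_def Tgen_idt)

lemma inc_comp:
  assumes "X \<in> P" "f \<in> Arr (Phi X)" "g \<in> Arr (Phi X)" "Cod (Phi X) f = Dom (Phi X) g"
  shows "Comp T (inc X g) (inc X f) = inc X (Comp (Phi X) g f)"
  unfolding inc_def using Tgen_comp[of X "Dom (Phi X) f" X f X g] assms by simp

lemma inc_idt: "X \<in> P \<Longrightarrow> x \<in> Obj (Phi X) \<Longrightarrow> inc X (Idt (Phi X) x) = Idt T (X, x)"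
  unfolding inc_def by (simp add: Tgen_idt)

lemma Tgen_factor:
  assumes "(X, x, Y, f) \<in> TE"
  shows "Tgen (X, x, Y, f) = Comp T (inc Y f) (iota (X, x) (Y, Fo X Y x))"
  unfolding iota_def inc_def using Tgen_comp[of X x Y "Idt (Phi Y) (Fo X Y x)" Y f] assms
  by (simp add: Fo_obj)

lemma inc_iota:
  assumes "X \<in> P" "Y \<in> P" "X \<subseteq> Y" "f \<in> Arr (Phi X)"
  shows "Comp T (inc Y (Fm X Y f)) (iota (X, Dom (Phi X) f) (Y, Fo X Y (Dom (Phi X) f))) =
         Comp T (iota (X, Cod (Phi X) f) (Y, Fo X Y (Cod (Phi X) f))) (inc X f)"
  using Tgen_factor[of X "Dom (Phi X) f" Y "Fm X Y f"] assms
    Tgen_comp[of X "Dom (Phi X) f" X f Y "Idt (Phi Y) (Fo X Y (Cod (Phi X) f))"]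
  by (simp add: iota_def inc_def Fo_obj Fm_arr dom_Fm cod_Fm)

end

context diagram
begin

definition delta_word :: "nat set \<times> 'o \<times> nat set \<times> 'm \<Rightarrow> (nat set \<times> 'm) word" where
  "delta_word = (\<lambda>(X, x, Y, f). [((Y, f), True)])"

definition delta_gen :: "nat set \<times> 'o \<times> nat set \<times> 'm \<Rightarrow> ('o, 'm) colim_arr" where
  "delta_gen e = (dobj (Ts e), dobj (Tt e), Ccls (dobj (Ts e)) (dobj (Tt e)) (delta_word e))"

lemma delta_word_wpath:
  assumes "e \<in> TE"
  shows "dobj (Ts e) \<in> CV \<and> dobj (Tt e) \<in> CV \<and> Cwp (dobj (Ts e)) (delta_word e) (dobj (Tt e))"
proof -
  obtain X x Y f where e: "e = (X, x, Y, f)" by (cases e)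
  then have "dobj (Y, Dom (Phi Y) f) = dobj (X, x)" using assms by (simp add: dobj_Fo)
  then show ?thesis using assms e groth_st[OF assms] by (auto simp: delta_word_def intro!: dobj_colim_V)
qed

lemma weval_delta_gen: "Twp a w b \<Longrightarrow> a \<in> TO \<Longrightarrow> Cwp (dobj a) (wlift delta_word w) (dobj b) \<and>
    weval C Ts Tt dobj delta_gen a w = (dobj a, dobj b, Ccls (dobj a) (dobj b) (wlift delta_word w))"
  unfolding colim_eq delta_gen_def
  by (rule weval_pres_gpd_wlift[where E = TE]) (use delta_word_wpath dobj_colim_V in auto)

lemma colim_R_comp: "X \<in> P \<Longrightarrow> f \<in> Arr (Phi X) \<Longrightarrow> g \<in> Arr (Phi X) \<Longrightarrow> Cod (Phi X) f = Dom (Phi X) g \<Longrightarrow>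
   ([((X, f), True), ((X, g), True)], [((X, Comp (Phi X) g f), True)]) \<in> CR"
  unfolding colim_R_def by (intro UnI1) (intro CollectI exI conjI; simp only: refl)

lemma colim_R_idt: "X \<in> P \<Longrightarrow> x \<in> Obj (Phi X) \<Longrightarrow> ([((X, Idt (Phi X) x), True)], []) \<in> CR"
  unfolding colim_R_def by (intro UnI1 UnI2) (intro CollectI exI conjI; simp only: refl)

lemma colim_R_Fm: "X \<in> P \<Longrightarrow> Y \<in> P \<Longrightarrow> X \<subseteq> Y \<Longrightarrow> f \<in> Arr (Phi X) \<Longrightarrow>
   ([((X, f), True)], [((Y, Fm X Y f), True)]) \<in> CR"
  unfolding colim_R_def by (intro UnI2) (intro CollectI exI conjI; simp only: refl)

lemma Ccls_rel: "(r, q) \<in> CR \<Longrightarrow> Cwp a (u @ r @ v) b \<Longrightarrow> Cwp a (u @ q @ v) b \<Longrightarrow>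
   Ccls a b (u @ r @ v) = Ccls a b (u @ q @ v)"
  by (intro wclass_eqI wequiv.rel)

lemma groth_R_cases:
  assumes "(r, q) \<in> TR"
  obtains X x Y f Z g where "(X, x, Y, f) \<in> TE" "(Y, Cod (Phi Y) f, Z, g) \<in> TE"
     "r = [((X, x, Y, f), True), ((Y, Cod (Phi Y) f, Z, g), True)]"
     "q = [((X, x, Z, Comp (Phi Z) g (Fm Y Z f)), True)]"
   | X x where "X \<in> P" "x \<in> Obj (Phi X)" "r = [((X, x, X, Idt (Phi X) x), True)]" "q = []"
  using assms unfolding groth_R_def by blast

lemma delta_word_respects_relations:
  assumes rq: "(r, q) \<in> TR" and "a \<in> TO" "Twp a r b" "Twp a q b"
  shows "Ccls (dobj a) (dobj b) (wlift delta_word r) = Ccls (dobj a) (dobj b) (wlift delta_word q)"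
proof -
  have lr: "Cwp (dobj a) (wlift delta_word r) (dobj b)" and lq: "Cwp (dobj a) (wlift delta_word q) (dobj b)"
    using weval_delta_gen assms by auto
  from rq show ?thesis
  proof (cases rule: groth_R_cases)
    case (1 X x Y f Z g)
    have h: "X \<in> P" "Y \<in> P" "Z \<in> P" "X \<subseteq> Y" "Y \<subseteq> Z" "x \<in> Obj (Phi X)" "f \<in> Arr (Phi Y)"
      "g \<in> Arr (Phi Z)" "Dom (Phi Y) f = Fo X Y x" "Dom (Phi Z) g = Fo Y Z (Cod (Phi Y) f)"
      using 1 by auto
    have wr: "wlift delta_word r = [] @ [((Y, f), True)] @ [((Z, g), True)]"
      and wq: "wlift delta_word q = [((Z, Comp (Phi Z) g (Fm Y Z f)), True)]"
      using 1 by (simp_all add: delta_word_def)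
    have "dobj (Z, Fo Y Z (Fo X Y x)) = dobj (X, x)"
      using h by (simp add: Fo_comp dobj_Fo Fo_obj)
    then have mid: "Cwp (dobj a) ([] @ [((Z, Fm Y Z f), True)] @ [((Z, g), True)]) (dobj b)"
      using lr wr h by (simp add: Fm_arr dom_Fm cod_Fm dobj_Fo)
    have "Ccls (dobj a) (dobj b) ([] @ [((Y, f), True)] @ [((Z, g), True)]) =
          Ccls (dobj a) (dobj b) ([] @ [((Z, Fm Y Z f), True)] @ [((Z, g), True)])"
      by (rule Ccls_rel[OF colim_R_Fm[of Y Z f]]) (use h lr wr mid in auto)
    also have "\<dots> = Ccls (dobj a) (dobj b) ([] @ [((Z, Comp (Phi Z) g (Fm Y Z f)), True)] @ [])"
      using Ccls_rel[OF colim_R_comp[of Z "Fm Y Z f" g], of "dobj a" "[]" "[]" "dobj b"] h mid lq wq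
      by (simp add: Fm_arr cod_Fm)
    finally show ?thesis using wr wq by simp
  next
    case (2 X x)
    have "Ccls (dobj a) (dobj b) ([] @ [((X, Idt (Phi X) x), True)] @ []) =
        Ccls (dobj a) (dobj b) ([] @ [] @ [])"
      by (rule Ccls_rel[OF colim_R_idt]) (use 2 lr lq in \<open>auto simp: delta_word_def\<close>)
    then show ?thesis using 2 by (simp add: delta_word_def)
  qed
qed

sublocale delta: presentation_interp TO TE Ts Tt TR C dobj delta_gen
proof
  show "groupoid C" by (rule groupoid_colim)
  show "\<And>e. e \<in> TE \<Longrightarrow> Ts e \<in> TO \<and> Tt e \<in> TO" by (rule groth_st)
  show "\<And>a. a \<in> TO \<Longrightarrow> dobj a \<in> Obj C" using dobj_colim_V by simp
  show "\<And>e. e \<in> TE \<Longrightarrow>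
      delta_gen e \<in> Arr C \<and> Dom C (delta_gen e) = dobj (Ts e) \<and> Cod C (delta_gen e) = dobj (Tt e)"
    using delta_word_wpath presentation.pres_arrI
    by (fastforce simp: delta_gen_def colim_eq pres_gpd_def)
  show "\<And>r q a b. (r, q) \<in> TR \<Longrightarrow> a \<in> TO \<Longrightarrow> Twp a r b \<Longrightarrow> Twp a q b \<Longrightarrow>
         weval C Ts Tt dobj delta_gen a r = weval C Ts Tt dobj delta_gen a q"
    using weval_delta_gen delta_word_respects_relations by simp
qed

lemma delta_arr_eq_induced: "f \<in> Arr T \<Longrightarrow> darr f = delta.induced_arr f"
proof -
  assume "f \<in> Arr T"
  then obtain a b w where f: "f = (a, b, Tcls a b w)" "a \<in> TO" "Twp a w b"
    unfolding twocolim_eq by (rule presentation.pres_arrE)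
  let ?w = "SOME w'. w' \<in> Tcls a b w"
  have eqv: "wequiv TE Ts Tt TR a b w ?w" by (rule wequiv_some_wclass[OF f(3)])
  have "darr f = weval C Ts Tt dobj delta_gen a ?w"
    using weval_delta_gen[OF conjunct2[OF wequiv_wpath[OF eqv]] f(2)]
    by (simp add: f delta_arr_def pres_fun_arr_def delta_word_def)
  also have "\<dots> = delta.induced_arr f"
    using delta.ev_wequiv[OF eqv f(2)] delta.induced_arr_wclass[OF f(2,3)] f(1) by simp
  finally show ?thesis .
qed

lemma delta_functor: "gfunctor T C dobj darr"
  using gfunctor_cong[OF groupoid_twocolim _ delta_arr_eq_induced[symmetric]] delta.induced_functor
  by (simp add: twocolim_eq)

lemma delta_arr_comp:
    "f \<in> Arr T \<Longrightarrow> g \<in> Arr T \<Longrightarrow> Cod T f = Dom T g \<Longrightarrow> darr (Comp T g f) = Comp C (darr g) (darr f)"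
  and cod_delta_arr: "f \<in> Arr T \<Longrightarrow> Cod C (darr f) = dobj (Cod T f)"
  and delta_arr_idt: "p \<in> TO \<Longrightarrow> darr (Idt T p) = Idt C (dobj p)"
  using gfunctorD[OF delta_functor] by auto

lemma delta_arr_ginv: "f \<in> Arr T \<Longrightarrow> darr (TG.ginv f) = CG.ginv (darr f)"
  using gfunctor_ginv[OF groupoid_twocolim groupoid_colim delta_functor] by blast

lemma delta_arr_conjugate:
  assumes "kp \<in> Arr T" "kq \<in> Arr T" "g \<in> Arr T" "Dom T kp = Dom T g" "Cod T g = Dom T kq"
  shows "darr (TG.conjugate kp g kq) = CG.conjugate (darr kp) (darr g) (darr kq)"
  using assms gfunctorD[OF delta_functor]
  by (simp add: TG.conjugate_def CG.conjugate_def delta_arr_comp delta_arr_ginv)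

lemma delta_arr_Tgen: "e \<in> TE \<Longrightarrow> darr (Tgen e) = delta_gen e"
  using delta_arr_eq_induced[OF Tgen_arr(1)] delta.induced_arr_gen by (simp add: twocolim_eq)

lemma delta_arr_iota: "tot_le p q \<Longrightarrow> darr (iota p q) = Idt C (dobj p)"
proof -
  assume pq: "tot_le p q"
  obtain X x Y where p: "p = (X, x)" and q: "q = (Y, Fo X Y x)"
      and h: "X \<in> P" "Y \<in> P" "X \<subseteq> Y" "x \<in> Obj (Phi X)"
    using pq by (cases p, cases q) (auto simp: tot_le_iff)
  have "Ccls (dobj p) (dobj p) ([] @ [((Y, Idt (Phi Y) (Fo X Y x)), True)] @ []) =
      Ccls (dobj p) (dobj p) ([] @ [] @ [])"
    by (rule Ccls_rel[OF colim_R_idt]) (use h p in \<open>auto simp: dobj_Fo Fo_obj intro: dobj_colim_V\<close>)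
  then show ?thesis
    using delta_arr_Tgen[of "(X, x, Y, Idt (Phi Y) (Fo X Y x))"] h p q
    by (simp add: iota_def delta_gen_def delta_word_def dobj_Fo Fo_obj colim_eq pres_gpd_def)
qed

lemma delta_arr_inc: "X \<in> P \<Longrightarrow> f \<in> Arr (Phi X) \<Longrightarrow> darr (inc X f) = Cgen (X, f)"
  using delta_arr_Tgen[of "(X, Dom (Phi X) f, X, f)"]
  by (simp add: inc_def delta_gen_def delta_word_def Cgen_eq)

end

section \<open>A quasi-inverse from a trivialization\<close>

context diagram
begin

definition trivializing :: "nat set set \<Rightarrow> (nat set \<times> 'o \<Rightarrow> ('o, 'm) twocolim_arr) \<Rightarrow> bool" where
  "trivializing Q k \<longleftrightarrow>
     (\<forall>p\<in>TO. fst p \<in> Q \<longrightarrow> k p \<in> Arr T \<and> Dom T (k p) = p \<and> darr (k p) = Idt C (dobj p)) \<and>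
     (\<forall>q q'. tot_le q q' \<longrightarrow> fst q \<in> Q \<longrightarrow> fst q' \<in> Q \<longrightarrow> Comp T (k q') (iota q q') = k q)"

context
  fixes k :: "nat set \<times> 'o \<Rightarrow> ('o, 'm) twocolim_arr"
  assumes trivializing: "trivializing P k"
begin

lemma k_arr: "p \<in> TO \<Longrightarrow> k p \<in> Arr T"
  and dom_k: "p \<in> TO \<Longrightarrow> Dom T (k p) = p"
  and delta_arr_k: "p \<in> TO \<Longrightarrow> darr (k p) = Idt C (dobj p)"
  using trivializing unfolding trivializing_def by (cases p, auto)+

lemma k_iota: "tot_le q q' \<Longrightarrow> Comp T (k q') (iota q q') = k q"
  using trivializing unfolding trivializing_def by (metis prod.collapse tot_le_tot_obj tot_obj_iff)

lemma cod_k_tot_le: "tot_le q q' \<Longrightarrow> Cod T (k q) = Cod T (k q')"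
  using k_iota[of q q'] k_arr dom_k iota_simps tot_le_tot_obj by (metis TG.cod_comp)

lemma cod_k_obj_rel: "(p, q) \<in> OR \<Longrightarrow> Cod T (k q) = Cod T (k p)"
proof (erule obj_rel_induct)
  fix X Y x assume "X \<in> P" "Y \<in> P" "X \<subseteq> Y" "x \<in> Obj (Phi X)"
  then have "Cod T (k (X, x)) = Cod T (k (Y, Fo X Y x))" by (simp add: cod_k_tot_le tot_le_iff)
  then show "Cod T (k (X, x)) = Cod T (k p) \<longleftrightarrow> Cod T (k (Y, Fo X Y x)) = Cod T (k p)" by simp
qed simp

lemma cod_k_tot_obj: "p \<in> TO \<Longrightarrow> Cod T (k p) \<in> TO"
  using TG.cod_obj[OF k_arr] by simp

lemma dobj_cod_k: "p \<in> TO \<Longrightarrow> dobj (Cod T (k p)) = dobj p"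
  using cod_delta_arr[OF k_arr] delta_arr_k dobj_colim_V by simp

definition inv_obj :: "(nat set \<times> 'o) set \<Rightarrow> nat set \<times> 'o" where
  "inv_obj c = Cod T (k (SOME p. p \<in> c))"

lemma inv_obj_dobj: "inv_obj (dobj p) = Cod T (k p)"
proof -
  have "(SOME q. q \<in> dobj p) \<in> dobj p" using mem_dobj dobj_eq_iff by (metis someI)
  then show ?thesis unfolding inv_obj_def using cod_k_obj_rel mem_dobj by metis
qed

lemma inv_obj_tot_obj: "c \<in> CV \<Longrightarrow> inv_obj c \<in> TO"
  using colim_V_dobj inv_obj_dobj cod_k_tot_obj by metis

lemma dobj_inv_obj: "c \<in> CV \<Longrightarrow> dobj (inv_obj c) = c"
  using colim_V_dobj inv_obj_dobj dobj_cod_k by metis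

definition inv_gen :: "nat set \<times> 'm \<Rightarrow> ('o, 'm) twocolim_arr" where
  "inv_gen = (\<lambda>(X, f). TG.conjugate (k (X, Dom (Phi X) f)) (inc X f) (k (X, Cod (Phi X) f)))"

lemma inv_gen_arr:
  assumes "X \<in> P" "f \<in> Arr (Phi X)"
  shows "inv_gen (X, f) \<in> Arr T"
    and "Dom T (inv_gen (X, f)) = inv_obj (Cs (X, f))"
    and "Cod T (inv_gen (X, f)) = inv_obj (Ct (X, f))"
  using assms k_arr dom_k inc_simps by (simp_all add: inv_gen_def inv_obj_dobj)

lemma inv_gen_comp:
  assumes "X \<in> P" "f \<in> Arr (Phi X)" "g \<in> Arr (Phi X)" "Cod (Phi X) f = Dom (Phi X) g"
  shows "Comp T (inv_gen (X, g)) (inv_gen (X, f)) = inv_gen (X, Comp (Phi X) g f)"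
  using assms k_arr dom_k inc_simps
  by (simp add: inv_gen_def TG.conjugate_comp inc_comp)

lemma inv_gen_idt:
  assumes "X \<in> P" "x \<in> Obj (Phi X)"
  shows "inv_gen (X, Idt (Phi X) x) = Idt T (Cod T (k (X, x)))"
  using assms k_arr dom_k by (simp add: inv_gen_def inc_idt TG.conjugate_def)

lemma inv_gen_Fm:
  assumes X: "X \<in> P" "Y \<in> P" "X \<subseteq> Y" "f \<in> Arr (Phi X)"
  shows "inv_gen (X, f) = inv_gen (Y, Fm X Y f)"
proof -
  let ?d = "(X, Dom (Phi X) f)" and ?c = "(X, Cod (Phi X) f)"
  let ?d' = "(Y, Fo X Y (Dom (Phi X) f))" and ?c' = "(Y, Fo X Y (Cod (Phi X) f))"
  have le: "tot_le ?d ?d'" "tot_le ?c ?c'" using X by (auto simp: tot_le_iff)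
  then have TO: "?d \<in> TO" "?c \<in> TO" "?d' \<in> TO" "?c' \<in> TO" using tot_le_tot_obj by blast+
  have fm: "Fm X Y f \<in> Arr (Phi Y)" "Dom (Phi Y) (Fm X Y f) = Fo X Y (Dom (Phi X) f)"
    "Cod (Phi Y) (Fm X Y f) = Fo X Y (Cod (Phi X) f)" using X by (auto simp: Fm_arr dom_Fm cod_Fm)
  note arrs = k_arr[OF TO(1)] k_arr[OF TO(2)] k_arr[OF TO(3)] k_arr[OF TO(4)]
    dom_k[OF TO(1)] dom_k[OF TO(2)] dom_k[OF TO(3)] dom_k[OF TO(4)]
    iota_simps[OF le(1)] iota_simps[OF le(2)] inc_simps[OF X(1,4)] inc_simps[OF X(2) fm(1)] fm
  have id_c: "TG.conjugate (k ?c) (iota ?c ?c') (k ?c') = Idt T (Cod T (k ?c))"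
    and id_d: "TG.conjugate (k ?d) (iota ?d ?d') (k ?d') = Idt T (Cod T (k ?d))"
    using TG.conjugate_eq_idt arrs k_iota[OF le(1)] k_iota[OF le(2)] by simp_all
  have "inv_gen (X, f) = Comp T (TG.conjugate (k ?c) (iota ?c ?c') (k ?c')) (inv_gen (X, f))"
    unfolding id_c using arrs by (simp add: inv_gen_def)
  also have "\<dots> = TG.conjugate (k ?d) (Comp T (iota ?c ?c') (inc X f)) (k ?c')"
    using arrs by (simp add: inv_gen_def TG.conjugate_comp)
  also have "\<dots> = TG.conjugate (k ?d) (Comp T (inc Y (Fm X Y f)) (iota ?d ?d')) (k ?c')"
    using inc_iota[OF X] by simp
  also have "\<dots> = Comp T (inv_gen (Y, Fm X Y f)) (TG.conjugate (k ?d) (iota ?d ?d') (k ?d'))"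
    using arrs by (simp add: inv_gen_def TG.conjugate_comp)
  also have "\<dots> = inv_gen (Y, Fm X Y f)"
    unfolding id_d using arrs cod_k_tot_le[OF le(1)] by (simp add: inv_gen_def)
  finally show ?thesis .
qed

lemma colim_R_cases:
  assumes "(r, q) \<in> CR"
  obtains X f g where "X \<in> P" "f \<in> Arr (Phi X)" "g \<in> Arr (Phi X)" "Cod (Phi X) f = Dom (Phi X) g"
     "r = [((X, f), True), ((X, g), True)]" "q = [((X, Comp (Phi X) g f), True)]"
   | X x where "X \<in> P" "x \<in> Obj (Phi X)" "r = [((X, Idt (Phi X) x), True)]" "q = []"
   | X Y f where "X \<in> P" "Y \<in> P" "X \<subseteq> Y" "f \<in> Arr (Phi X)" "r = [((X, f), True)]"
       "q = [((Y, Fm X Y f), True)]"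
  using assms unfolding colim_R_def
  by (elim UnE CollectE exE conjE) (simp_all add: that)

lemma weval_inv_gen_single:
  assumes "X \<in> P" "f \<in> Arr (Phi X)"
  shows "weval T Cs Ct inv_obj inv_gen a [((X, f), True)] = inv_gen (X, f)"
  using TG.comp_idt_cod[OF inv_gen_arr(1,3)[OF assms]] by simp

lemma inv_gen_respects_relations:
  assumes "(r, q) \<in> CR" "Cwp a r b"
  shows "weval T Cs Ct inv_obj inv_gen a r = weval T Cs Ct inv_obj inv_gen a q"
  using assms(1)
proof (cases rule: colim_R_cases)
  case (1 X f g)
  have "Cod T (inv_gen (X, g)) = inv_obj (Ct (X, g))"
    using inv_gen_arr(3)[OF 1(1,3)] .
  then have "weval T Cs Ct inv_obj inv_gen a r = Comp T (inv_gen (X, g)) (inv_gen (X, f))"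
    using 1 inv_gen_arr(1)[OF 1(1,3)] by simp
  then show ?thesis
    using 1 inv_gen_comp[OF 1(1-4)] weval_inv_gen_single[OF 1(1) Phi_comp[OF 1(1-4)]] by simp
next
  case (2 X x)
  then have "a = dobj (X, x)" using assms(2) by simp
  then show ?thesis
    using 2 inv_gen_idt[OF 2(1,2)] weval_inv_gen_single[OF 2(1) Phi_idt[OF 2(1,2)]]
      by (simp add: inv_obj_dobj)
next
  case (3 X Y f)
  then show ?thesis
    using inv_gen_Fm[OF 3(1-4)] weval_inv_gen_single[OF 3(1,4)]
      weval_inv_gen_single[OF 3(2) Fm_arr[OF 3(1-4)]]
    by simp
qed

lemma inv_interp: "presentation_interp CV CE Cs Ct CR T inv_obj inv_gen"
  by unfold_locales
    (use groupoid_twocolim colim_st inv_obj_tot_obj inv_gen_respects_relations inv_gen_arr in auto)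

definition inv_arr :: "('o, 'm) colim_arr \<Rightarrow> ('o, 'm) twocolim_arr" where
  "inv_arr = presentation_interp.induced_arr Cs Ct T inv_obj inv_gen"

lemma inv_functor: "gfunctor C T inv_obj inv_arr"
  using presentation_interp.induced_functor[OF inv_interp] by (simp add: inv_arr_def colim_eq)

lemma inv_arr_Cgen: "e \<in> CE \<Longrightarrow> inv_arr (Cgen e) = inv_gen e"
  using presentation_interp.induced_arr_gen[OF inv_interp] by (simp add: inv_arr_def)

lemma unit_nat_iso: "nat_iso T T id id (inv_obj \<circ> dobj) (inv_arr \<circ> darr) k"
proof -
  have "nat_iso (pres_gpd TO TE Ts Tt TR) T id id (inv_obj \<circ> dobj) (inv_arr \<circ> darr) k"
  proof (rule presentation.nat_iso_from_generators)
    show "gfunctor (pres_gpd TO TE Ts Tt TR) T id id"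
      using gfunctor_id[OF groupoid_twocolim] by (simp add: twocolim_eq)
    show "gfunctor (pres_gpd TO TE Ts Tt TR) T (inv_obj \<circ> dobj) (inv_arr \<circ> darr)"
      using gfunctor_comp[OF delta_functor inv_functor] by (simp add: twocolim_eq)
  next
    fix e assume e: "e \<in> TE"
    obtain X x Y f where ee: "e = (X, x, Y, f)" by (cases e)
    have h: "X \<in> P" "Y \<in> P" "X \<subseteq> Y" "x \<in> Obj (Phi X)" "f \<in> Arr (Phi Y)" "Dom (Phi Y) f = Fo X Y x"
      using e ee by auto
    have le: "tot_le (X, x) (Y, Fo X Y x)" using h by (simp add: tot_le_iff)
    have "darr (Tgen e) = Cgen (Y, f)"
      using delta_arr_Tgen[OF e] h ee dobj_Fo[OF h(1-4)] by (simp add: delta_gen_def delta_word_def Cgen_eq)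
    then have inv: "(inv_arr \<circ> darr) (Tgen e) = inv_gen (Y, f)"
      using inv_arr_Cgen[of "(Y, f)"] h by simp
    let ?p = "(X, x)" and ?q = "(Y, Fo X Y x)" and ?c = "(Y, Cod (Phi Y) f)"
    note arrs = k_arr dom_k inc_simps[OF h(2,5)] iota_simps[OF le] tot_le_tot_obj[OF le] h
    have "Comp T (inv_gen (Y, f)) (k ?p) =
        Comp T (TG.conjugate (k ?q) (inc Y f) (k ?c)) (Comp T (k ?q) (iota ?p ?q))"
      using k_iota[OF le] h by (simp add: inv_gen_def)
    also have "\<dots> = Comp T (Comp T (TG.conjugate (k ?q) (inc Y f) (k ?c)) (k ?q)) (iota ?p ?q)"
      using arrs by (simp add: TG.comp_assoc)
    also have "\<dots> = Comp T (k ?c) (Comp T (inc Y f) (iota ?p ?q))"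
      using arrs by (simp add: TG.conjugate_comp_right TG.comp_assoc)
    also have "\<dots> = Comp T (k ?c) (Tgen e)"
      using Tgen_factor[OF e[unfolded ee]] ee by simp
    finally show "Comp T (k (Tt e)) (id (Tgen e)) = Comp T ((inv_arr \<circ> darr) (Tgen e)) (k (Ts e))"
      using inv ee by simp
  qed (use groth_st groupoid_twocolim k_arr dom_k inv_obj_dobj in auto)
  then show ?thesis by (simp add: twocolim_eq)
qed

lemma counit_nat_iso: "nat_iso C C (dobj \<circ> inv_obj) (darr \<circ> inv_arr) id id (Idt C)"
proof -
  have "nat_iso (pres_gpd CV CE Cs Ct CR) C (dobj \<circ> inv_obj) (darr \<circ> inv_arr) id id (Idt C)"
  proof (rule presentation.nat_iso_from_generators)
    show "gfunctor (pres_gpd CV CE Cs Ct CR) C id id"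
      using gfunctor_id[OF groupoid_colim] by (simp add: colim_eq)
    show "gfunctor (pres_gpd CV CE Cs Ct CR) C (dobj \<circ> inv_obj) (darr \<circ> inv_arr)"
      using gfunctor_comp[OF inv_functor delta_functor] by (simp add: colim_eq)
  next
    fix e assume e: "e \<in> CE"
    obtain X f where ee: "e = (X, f)" and h: "X \<in> P" "f \<in> Arr (Phi X)" using e by (cases e) auto
    have "darr (inv_arr (Cgen e)) = Cgen e"
      using inv_arr_Cgen[OF e] ee h k_arr dom_k delta_arr_k inc_simps CG.conjugate_idt[OF Cgen_arr(1)[OF e]]
      by (simp add: inv_gen_def delta_arr_conjugate delta_arr_inc Cgen_arr)
    then show "Comp C (Idt C (Ct e)) ((darr \<circ> inv_arr) (Cgen e)) = Comp C (id (Cgen e)) (Idt C (Cs e))"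
      using Cgen_arr e by simp
  qed (use colim_st groupoid_colim dobj_inv_obj in auto)
  then show ?thesis by (simp add: colim_eq)
qed

end

lemma gpd_equivalence_delta: "trivializing P k \<Longrightarrow> gpd_equivalence T C dobj darr"
  unfolding gpd_equivalence_def using delta_functor inv_functor unit_nat_iso counit_nat_iso by blast

end

section \<open>Diagrams over the proper subsets of a finite set\<close>

lemma condA_self: "condA Phi Fo Fm V V"
proof -
  have "tot_obj (Bposet V V) Phi = {}" by (auto simp: tot_obj_def Bposet_def)
  then show ?thesis by (simp add: condA_def colim_def pres_gpd_def colim_V_def)
qed

context diagram
begin

lemma obj_rel_condA:
  assumes A: "condA Phi Fo Fm V U" and V: "V \<in> P" and B: "Bposet V U \<subseteq> P"
    and d: "d1 \<in> TO" "d2 \<in> TO" "fst d1 \<in> Bposet V U" "fst d2 \<in> Bposet V U"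
    and eq: "Fo (fst d1) V (snd d1) = Fo (fst d2) V (snd d2)"
  shows "(d1, d2) \<in> obj_rel (Bposet V U) Phi Fo"
proof -
  let ?R = "obj_rel (Bposet V U) Phi Fo"
  have refl: "(d, d) \<in> ?R" for d by (simp add: obj_rel_def Let_def)
  have Fo_V: "Fo (fst p) V (snd p) = Fo (fst d) V (snd d)" if "(d, p) \<in> ?R" for d p
  proof (rule obj_rel_induct[OF that])
    fix X Y x assume "X \<in> Bposet V U" "Y \<in> Bposet V U" "X \<subseteq> Y" "x \<in> Obj (Phi X)"
    then have "Fo Y V (Fo X Y x) = Fo X V x" using B V by (intro Fo_comp) (auto simp: Bposet_def)
    then show "Fo (fst (X, x)) V (snd (X, x)) = Fo (fst d) V (snd d) \<longleftrightarrow>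
        Fo (fst (Y, Fo X Y x)) V (snd (Y, Fo X Y x)) = Fo (fst d) V (snd d)" by simp
  qed simp
  have canon: "canon_obj Fo V (?R `` {d}) = Fo (fst d) V (snd d)" for d
  proof -
    have "(SOME p. p \<in> ?R `` {d}) \<in> ?R `` {d}" using refl by (metis Image_singleton_iff someI)
    then show ?thesis using Fo_V unfolding canon_obj_def by (simp add: case_prod_beta)
  qed
  have "?R `` {d1} \<in> Obj (colim (Bposet V U) Phi Fo Fm)" "?R `` {d2} \<in> Obj (colim (Bposet V U) Phi Fo Fm)"
    using d
    by (cases d1, cases d2, auto simp: colim_def pres_gpd_def colim_V_def tot_obj_def intro: quotientI)
  then have "?R `` {d1} = ?R `` {d2}"
    using A canon eq unfolding condA_def by (metis inj_onD)
  then show ?thesis using refl[of d2] by blast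
qed

end

locale cube_diagram = diagram P Phi Fo Fm
  for P :: "nat set set" and Phi :: "nat set \<Rightarrow> ('o, 'm) gpd"
    and Fo :: "nat set \<Rightarrow> nat set \<Rightarrow> 'o \<Rightarrow> 'o" and Fm :: "nat set \<Rightarrow> nat set \<Rightarrow> 'm \<Rightarrow> 'm" +
  fixes n :: nat
  assumes P_eq: "P = Bposet {1..n} {}"
    and condA_facet: "\<And>m. 1 \<le> m \<Longrightarrow> m \<le> n \<Longrightarrow> condA Phi Fo Fm ({1..n} - {m}) {Suc m..n}"
begin

definition upper :: "nat \<Rightarrow> nat set set" where
  "upper m = {X. {Suc m..n} \<subseteq> X \<and> X \<subset> {1..n}}"

definition facet :: "nat \<Rightarrow> nat set" where
  "facet m = {1..n} - {m}"

definition link :: "nat \<Rightarrow> nat set set" where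
  "link m = Bposet (facet m) {Suc m..n}"

definition ins :: "nat \<Rightarrow> nat set \<times> 'o \<Rightarrow> nat set \<times> 'o" where
  "ins m p = (insert m (fst p), Fo (fst p) (insert m (fst p)) (snd p))"

lemma mem_P_iff: "X \<in> P \<longleftrightarrow> X \<subset> {1..n}"
  by (simp add: P_eq Bposet_def)

lemma upper_mem_P: "X \<in> upper m \<Longrightarrow> X \<in> P"
  by (simp add: upper_def mem_P_iff)

lemma link_mem_P: "X \<in> link m \<Longrightarrow> X \<in> P"
  by (auto simp: link_def Bposet_def facet_def mem_P_iff)

lemma link_subset_facet: "X \<in> link m \<Longrightarrow> X \<subset> facet m"
  by (simp add: link_def Bposet_def)

lemma facet_mem_upper: "1 \<le> m \<Longrightarrow> m \<le> n \<Longrightarrow> facet m \<in> upper m"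
proof -
  assume "1 \<le> m" "m \<le> n"
  then have "m \<in> {1..n}" by simp
  then have "{1..n} - {m} \<subset> {1..n}" by blast
  then show ?thesis by (auto simp: upper_def facet_def)
qed

lemma atLeastAtMost_pred_subset: "1 \<le> m \<Longrightarrow> {Suc (m - 1)..n} \<subseteq> insert m {Suc m..n}"
  by auto

lemma insert_mem_upper:
  assumes "1 \<le> m" "m \<le> n" "X \<in> link m"
  shows "insert m X \<in> upper (m - 1)"
proof -
  have X: "{Suc m..n} \<subseteq> X" "X \<subset> {1..n} - {m}" using assms(3) by (auto simp: link_def Bposet_def facet_def)
  then obtain j where "j \<in> {1..n} - {m}" "j \<notin> X" by blast
  then have "insert m X \<subset> {1..n}" using assms(1,2) X(2) by auto
  moreover have "{Suc (m - 1)..n} \<subseteq> insert m X"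
    using atLeastAtMost_pred_subset[OF assms(1)] X(1) by blast
  ultimately show ?thesis by (simp add: upper_def)
qed

lemma upper_cases:
  assumes "1 \<le> m" "X \<in> upper m"
  obtains "m \<in> X" "X \<in> upper (m - 1)" | "X \<in> link m" | "X = facet m"
proof (cases "m \<in> X")
  case True
  then have "{Suc (m - 1)..n} \<subseteq> X"
    using atLeastAtMost_pred_subset[OF assms(1)] assms(2) by (auto simp: upper_def)
  then show ?thesis using that(1) True assms(2) by (simp add: upper_def)
next
  case False
  then have "X \<subseteq> facet m" using assms(2) by (auto simp: upper_def facet_def)
  then show ?thesis using that(2,3) assms(2) by (auto simp: link_def Bposet_def upper_def)
qed

lemma upper_0: "upper 0 = {}"
  by (auto simp: upper_def)

lemma upper_n: "upper n = P"
  by (simp add: upper_def mem_P_iff set_eq_iff)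

lemma ins_tot_le:
  assumes "1 \<le> m" "m \<le> n" "X \<in> link m" "x \<in> Obj (Phi X)"
  shows "tot_le (X, x) (ins m (X, x))" "fst (ins m (X, x)) \<in> upper (m - 1)"
  using assms insert_mem_upper[OF assms(1-3)] upper_mem_P link_mem_P
  by (auto simp: ins_def tot_le_iff)

lemma ins_least:
  assumes "tot_le (X, x) q" "m \<in> fst q"
  shows "tot_le (ins m (X, x)) q"
proof -
  obtain Y where q: "q = (Y, Fo X Y x)" and h: "X \<in> P" "Y \<in> P" "x \<in> Obj (Phi X)" "X \<subseteq> Y"
    using assms(1) by (cases q) (auto simp: tot_le_iff)
  have "insert m X \<subseteq> Y" using h assms(2) q by auto
  moreover then have "insert m X \<in> P" using h(2) by (auto simp: mem_P_iff)
  moreover have "Fo (insert m X) Y (Fo X (insert m X) x) = Fo X Y x"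
    by (rule Fo_comp) (use h calculation in auto)
  moreover have "Fo X (insert m X) x \<in> Obj (Phi (insert m X))"
    by (rule Fo_obj) (use h calculation in auto)
  ultimately show ?thesis using h q by (auto simp: ins_def tot_le_iff)
qed

lemma ins_mono:
  assumes "1 \<le> m" "m \<le> n" "X \<in> link m" "Y \<in> link m" "tot_le (X, x) (Y, y)"
  shows "tot_le (ins m (X, x)) (ins m (Y, y))"
proof -
  have h: "X \<in> P" "Y \<in> P" "x \<in> Obj (Phi X)" "X \<subseteq> Y" "y = Fo X Y x"
    using assms(5) by (auto simp: tot_le_iff)
  have iX: "insert m X \<in> P" and iY: "insert m Y \<in> P"
    using insert_mem_upper[OF assms(1,2)] assms(3,4) upper_mem_P by blast+
  have "Fo (insert m X) (insert m Y) (Fo X (insert m X) x) = Fo X (insert m Y) x"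
    and "Fo Y (insert m Y) (Fo X Y x) = Fo X (insert m Y) x"
    using h iX iY by (intro Fo_comp; auto)+
  moreover have "Fo X (insert m X) x \<in> Obj (Phi (insert m X))" by (rule Fo_obj) (use h iX in auto)
  ultimately show ?thesis using h iX iY by (auto simp: ins_def tot_le_iff)
qed

lemma tot_le_facet:
  assumes "tot_le q q'" "fst q = facet m" "fst q' \<in> upper m"
  shows "q' = q"
proof -
  obtain X x Y y where q: "q = (X, x)" "q' = (Y, y)" by (cases q, cases q')
  have "X \<subseteq> Y" "y = Fo X Y x" "X \<in> P" "x \<in> Obj (Phi X)" using assms(1) q by (auto simp: tot_le_iff)
  moreover have "Y = X" using assms(2,3) q \<open>X \<subseteq> Y\<close> by (auto simp: upper_def facet_def)
  ultimately show ?thesis using q by simp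
qed

end

context cube_diagram
begin

context
  fixes m :: nat and k :: "nat set \<times> 'o \<Rightarrow> ('o, 'm) twocolim_arr"
  assumes m: "1 \<le> m" "m \<le> n" and trivializing_prev: "trivializing (upper (m - 1)) k"
begin

lemma prev_arr: "p \<in> TO \<Longrightarrow> fst p \<in> upper (m - 1) \<Longrightarrow>
    k p \<in> Arr T \<and> Dom T (k p) = p \<and> darr (k p) = Idt C (dobj p)"
  using trivializing_prev[unfolded trivializing_def, THEN conjunct1] by blast

lemma prev_iota: "tot_le q q' \<Longrightarrow> fst q \<in> upper (m - 1) \<Longrightarrow> fst q' \<in> upper (m - 1) \<Longrightarrow>
    Comp T (k q') (iota q q') = k q"
  using trivializing_prev[unfolded trivializing_def, THEN conjunct2] by blast

definition over_link :: "nat set \<times> 'o \<Rightarrow> bool" where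
  "over_link d \<longleftrightarrow> d \<in> TO \<and> fst d \<in> link m"

definition extend_link :: "nat set \<times> 'o \<Rightarrow> ('o, 'm) twocolim_arr" where
  "extend_link d = Comp T (k (ins m d)) (iota d (ins m d))"

lemma over_link_ins:
  assumes "over_link d"
  shows "tot_le d (ins m d)" "fst (ins m d) \<in> upper (m - 1)" "ins m d \<in> TO"
proof -
  obtain X x where d: "d = (X, x)" "X \<in> link m" "x \<in> Obj (Phi X)"
    using assms by (cases d) (auto simp: over_link_def)
  show "tot_le d (ins m d)" "fst (ins m d) \<in> upper (m - 1)"
    using ins_tot_le[OF m d(2,3)] d(1) by simp_all
  then show "ins m d \<in> TO" using tot_le_tot_obj by blast
qed

lemma extend_link_arr:
  assumes "over_link d"
  shows "extend_link d \<in> Arr T" "Dom T (extend_link d) = d" "darr (extend_link d) = Idt C (dobj d)"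
proof -
  note ins = over_link_ins[OF assms]
  note arrs = prev_arr[OF ins(3,2)] iota_simps[OF ins(1)]
  show "extend_link d \<in> Arr T" "Dom T (extend_link d) = d" using arrs by (simp_all add: extend_link_def)
  have "d \<in> TO" using assms by (simp add: over_link_def)
  then show "darr (extend_link d) = Idt C (dobj d)"
    using arrs delta_arr_iota[OF ins(1)] dobj_tot_le[OF ins(1)] dobj_colim_V
    by (simp add: extend_link_def delta_arr_comp)
qed

lemma extend_link_eq:
  assumes d: "over_link d" and le: "tot_le d q" and q: "m \<in> fst q" "fst q \<in> upper m"
  shows "Comp T (k q) (iota d q) = extend_link d"
proof -
  note ins = over_link_ins[OF d]
  have le': "tot_le (ins m d) q" using ins_least[of "fst d" "snd d" q m] le q by simp
  have q': "fst q \<in> upper (m - 1)" using q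
    by (cases rule: upper_cases[OF m(1) q(2)]) (auto simp: link_def Bposet_def facet_def)
  have "Comp T (k q) (iota d q) = Comp T (k q) (Comp T (iota (ins m d) q) (iota d (ins m d)))"
    using iota_comp[OF ins(1) le'] by simp
  also have "\<dots> = Comp T (Comp T (k q) (iota (ins m d) q)) (iota d (ins m d))"
    using iota_simps[OF ins(1)] iota_simps[OF le'] prev_arr[OF tot_le_tot_obj(2)[OF le] q']
      by (simp add: TG.comp_assoc)
  also have "\<dots> = extend_link d" using prev_iota[OF le' ins(2) q'] by (simp add: extend_link_def)
  finally show ?thesis .
qed

lemma extend_link_iota:
  assumes d: "over_link d" "over_link d'" and le: "tot_le d d'"
  shows "Comp T (extend_link d') (iota d d') = extend_link d"
proof -
  note ins = over_link_ins[OF d(1)] and ins' = over_link_ins[OF d(2)]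
  have le': "tot_le (ins m d) (ins m d')"
    using ins_mono[OF m, of "fst d" "fst d'" "snd d" "snd d'"] d le by (simp add: over_link_def)
  note arrs = iota_simps[OF ins(1)] iota_simps[OF ins'(1)] iota_simps[OF le] iota_simps[OF le']
    prev_arr[OF ins'(3,2)]
  have "Comp T (extend_link d') (iota d d') = Comp T (k (ins m d')) (iota d (ins m d'))"
    using arrs iota_comp[OF le ins'(1)] by (simp add: extend_link_def TG.comp_assoc[symmetric])
  also have "\<dots> = Comp T (k (ins m d')) (Comp T (iota (ins m d) (ins m d')) (iota d (ins m d)))"
    using iota_comp[OF ins(1) le'] by simp
  also have "\<dots> = Comp T (Comp T (k (ins m d')) (iota (ins m d) (ins m d'))) (iota d (ins m d))"
    using arrs by (simp add: TG.comp_assoc)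
  also have "\<dots> = extend_link d" using prev_iota[OF le' ins(2) ins'(2)] by (simp add: extend_link_def)
  finally show ?thesis .
qed

definition link_below :: "nat set \<times> 'o \<Rightarrow> nat set \<times> 'o \<Rightarrow> bool" where
  "link_below t d \<longleftrightarrow> over_link d \<and> tot_le d t"

lemma link_below_Fo:
  assumes t: "fst t = facet m" "t \<in> TO" and X: "X \<in> link m" "Y \<in> link m" "X \<subseteq> Y" "x \<in> Obj (Phi X)"
  shows "link_below t (X, x) \<longleftrightarrow> link_below t (Y, Fo X Y x)"
proof -
  have XY: "X \<in> P" "Y \<in> P" "X \<subseteq> fst t" "Y \<subseteq> fst t"
    using X t(1) link_mem_P link_subset_facet[OF X(1)] link_subset_facet[OF X(2)] by auto
  then have "Fo X Y x \<in> Obj (Phi Y)" "Fo Y (fst t) (Fo X Y x) = Fo X (fst t) x"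
    using X t Fo_obj Fo_comp[of X Y "fst t" x] by (cases t, auto)+
  then show ?thesis using X XY t by (cases t) (auto simp: link_below_def over_link_def tot_le_iff)
qed

text \<open>Objects of the link below a top object have the same image in the facet, so condition A
  connects them by structure arrows, along which the transported choices agree.\<close>

lemma extend_link_indep:
  assumes t: "fst t = facet m" "t \<in> TO" and b: "link_below t d1" "link_below t d2"
  shows "Comp T (extend_link d2) (TG.ginv (iota d2 t)) = Comp T (extend_link d1) (TG.ginv (iota d1 t))"
proof -
  have le: "tot_le d1 t" "tot_le d2 t" and o: "over_link d1" "over_link d2"
    using b by (auto simp: link_below_def)
  have "Fo (fst d1) (facet m) (snd d1) = snd t" "Fo (fst d2) (facet m) (snd d2) = snd t"
    using le t by (cases d1, cases d2, cases t, auto simp: tot_le_iff)+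
  then have rel: "(d1, d2) \<in> obj_rel (link m) Phi Fo"
    using obj_rel_condA[OF condA_facet[OF m]] facet_mem_upper[OF m] upper_mem_P link_mem_P o
    by (simp add: link_def facet_def over_link_def subset_eq)
  let ?Q = "\<lambda>d. link_below t d \<and>
      Comp T (extend_link d) (TG.ginv (iota d t)) = Comp T (extend_link d1) (TG.ginv (iota d1 t))"
  have "?Q d2"
  proof (rule obj_rel_induct[OF rel, of ?Q])
    fix X Y x assume h: "X \<in> link m" "Y \<in> link m" "X \<subseteq> Y" "x \<in> Obj (Phi X)"
    let ?e = "(X, x)" and ?e' = "(Y, Fo X Y x)"
    have same: "link_below t ?e \<longleftrightarrow> link_below t ?e'" by (rule link_below_Fo[OF t h])
    have eq: "Comp T (extend_link ?e) (TG.ginv (iota ?e t)) =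
        Comp T (extend_link ?e') (TG.ginv (iota ?e' t))"
      if "link_below t ?e"
    proof -
      have le1: "tot_le ?e ?e'" using h link_mem_P by (simp add: tot_le_iff)
      have o: "over_link ?e" "over_link ?e'" "tot_le ?e' t" using that same by (auto simp: link_below_def)
      show ?thesis
        unfolding extend_link_iota[OF o(1,2) le1, symmetric] iota_comp[OF le1 o(3), symmetric]
        by (rule TG.comp_ginv_precomp)
          (use iota_simps[OF le1] iota_simps[OF o(3)] extend_link_arr[OF o(2)] in auto)
    qed
    show "?Q ?e \<longleftrightarrow> ?Q ?e'" using eq same by (cases "link_below t ?e") simp_all
  qed (use b in simp)
  then show ?thesis by simp
qed

definition extend_facet :: "nat set \<times> 'o \<Rightarrow> ('o, 'm) twocolim_arr" where
  "extend_facet t = (if \<exists>d. link_below t d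
     then Comp T (extend_link (SOME d. link_below t d)) (TG.ginv (iota (SOME d. link_below t d) t))
     else Idt T t)"

lemma extend_facet_eq:
  assumes t: "fst t = facet m" "t \<in> TO" and b: "link_below t d"
  shows "extend_facet t = Comp T (extend_link d) (TG.ginv (iota d t))"
proof -
  have ex: "\<exists>d. link_below t d" using b by blast
  show ?thesis unfolding extend_facet_def using ex extend_link_indep[OF t b someI_ex[OF ex]] by simp
qed

lemma extend_facet_arr:
  assumes t: "fst t = facet m" "t \<in> TO"
  shows "extend_facet t \<in> Arr T \<and> Dom T (extend_facet t) = t \<and> darr (extend_facet t) = Idt C (dobj t)"
proof (cases "\<exists>d. link_below t d")
  case True
  then obtain d where b: "link_below t d" by blast
  then have le: "tot_le d t" and o: "over_link d" by (auto simp: link_below_def)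
  note arrs = extend_link_arr[OF o] iota_simps[OF le]
  have "darr (extend_facet t) = Comp C (Idt C (dobj d)) (CG.ginv (Idt C (dobj d)))"
    using arrs extend_facet_eq[OF t b] delta_arr_iota[OF le]
    by (simp add: delta_arr_comp delta_arr_ginv)
  then show ?thesis
    using arrs extend_facet_eq[OF t b] dobj_tot_le[OF le] dobj_colim_V tot_le_tot_obj[OF le] by simp
next
  case False
  then show ?thesis using t delta_arr_idt by (simp add: extend_facet_def)
qed

lemma extend_facet_iota:
  assumes t: "fst t = facet m" "t \<in> TO" and b: "link_below t d"
  shows "Comp T (extend_facet t) (iota d t) = extend_link d"
proof -
  have le: "tot_le d t" and o: "over_link d" using b by (auto simp: link_below_def)
  show ?thesis using extend_facet_eq[OF t b] extend_link_arr[OF o] iota_simps[OF le] by simp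
qed

definition extend :: "nat set \<times> 'o \<Rightarrow> ('o, 'm) twocolim_arr" where
  "extend p = (if m \<in> fst p then k p else if fst p = facet m then extend_facet p else extend_link p)"

lemma extend_arr:
  assumes p: "p \<in> TO" "fst p \<in> upper m"
  shows "extend p \<in> Arr T \<and> Dom T (extend p) = p \<and> darr (extend p) = Idt C (dobj p)"
proof (cases rule: upper_cases[OF m(1) p(2)])
  case 1
  then show ?thesis using prev_arr[OF p(1)] by (simp add: extend_def)
next
  case 2
  then have "m \<notin> fst p" "fst p \<noteq> facet m" "over_link p"
    using link_subset_facet p by (auto simp: over_link_def facet_def)
  then show ?thesis using extend_link_arr by (simp add: extend_def)
next
  case 3
  then show ?thesis using extend_facet_arr[OF 3 p(1)] by (simp add: extend_def facet_def)
qed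

lemma extend_iota:
  assumes le: "tot_le q q'" and q: "fst q \<in> upper m" and q': "fst q' \<in> upper m"
  shows "Comp T (extend q') (iota q q') = extend q"
proof -
  have qT: "q \<in> TO" "q' \<in> TO" using tot_le_tot_obj le by auto
  have m_mono: "m \<in> fst q \<Longrightarrow> m \<in> fst q'" using le by (cases q, cases q') (auto simp: tot_le_iff)
  have upper_prev: "fst q' \<in> upper (m - 1)" if "m \<in> fst q'"
    using that by (cases rule: upper_cases[OF m(1) q']) (auto simp: link_def Bposet_def facet_def)
  show ?thesis
  proof (cases rule: upper_cases[OF m(1) q])
    case 1
    then show ?thesis using prev_iota[OF le] m_mono upper_prev by (simp add: extend_def)
  next
    case 2
    then have o: "over_link q" and e: "extend q = extend_link q"
      using qT link_subset_facet by (auto simp: over_link_def extend_def facet_def)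
    show ?thesis
    proof (cases rule: upper_cases[OF m(1) q'])
      case 1
      then show ?thesis using extend_link_eq[OF o le _ q'] e by (simp add: extend_def)
    next
      case 2
      then have "over_link q'" "m \<notin> fst q'" "fst q' \<noteq> facet m"
        using qT link_subset_facet by (auto simp: over_link_def facet_def)
      then show ?thesis using extend_link_iota[OF o _ le] e by (simp add: extend_def)
    next
      case 3
      then have "link_below q' q" using o le by (simp add: link_below_def)
      then show ?thesis using extend_facet_iota[OF 3 qT(2)] e 3 by (simp add: extend_def facet_def)
    qed
  next
    case 3
    then have "q' = q" using tot_le_facet[OF le _ q'] by simp
    then show ?thesis using iota_idt[OF qT(1)] extend_arr[OF qT(1) q] by simp
  qed
qed

lemma trivializing_ext: "trivializing (upper m) extend"
  unfolding trivializing_def using extend_arr extend_iota by blast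

end

lemma trivializing_upper: "m \<le> n \<Longrightarrow> \<exists>k. trivializing (upper m) k"
proof (induction m)
  case 0
  then show ?case by (simp add: trivializing_def upper_0)
next
  case (Suc m)
  then obtain k where "trivializing (upper (Suc m - 1)) k" by auto
  then show ?case using trivializing_ext[of "Suc m" k] Suc.prems by auto
qed

theorem gpd_equivalence_delta_cube: "gpd_equivalence T C dobj darr"
  using trivializing_upper[of n] gpd_equivalence_delta by (auto simp: upper_n)

end

lemma condA_facets:
  assumes "condA Phi Fo Fm {1..n - 1} {}"
    and "\<And>k. 1 \<le> k \<Longrightarrow> k + 2 \<le> n \<Longrightarrow> condA Phi Fo Fm ({1..k} \<union> {k + 2..n}) {k + 2..n}"
    and m: "1 \<le> m" "m \<le> n"
  shows "condA Phi Fo Fm ({1..n} - {m}) {Suc m..n}"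
proof -
  consider "m = 1" | "1 < m" "m < n" | "1 < m" "m = n" using m by linarith
  then show ?thesis
  proof cases
    case 1
    then have "{1..n} - {m} = {Suc m..n}" by auto
    then show ?thesis using condA_self by metis
  next
    case 2
    then have "{1..m - 1} \<union> {m - 1 + 2..n} = {1..n} - {m}" "m - 1 + 2 = Suc m" by auto
    then show ?thesis using assms(2)[of "m - 1"] 2 by simp
  next
    case 3
    then have "{1..n - 1} = {1..n} - {m}" "{Suc m..n} = {}" by auto
    then show ?thesis using assms(1) by simp
  qed
qed

theorem corollary5p4:
  fixes n :: nat
    and Phi :: "nat set \<Rightarrow> ('o, 'm) gpd"
    and Fo :: "nat set \<Rightarrow> nat set \<Rightarrow> 'o \<Rightarrow> 'o"
    and Fm :: "nat set \<Rightarrow> nat set \<Rightarrow> 'm \<Rightarrow> 'm"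
  assumes n2: "n \<ge> 2"
    and diag: "gpd_diagram (Bposet {1..n} {}) Phi Fo Fm"
    and A1: "\<And>k. k \<in> {n - 2, n - 1} \<Longrightarrow> k \<ge> 1 \<Longrightarrow> condA Phi Fo Fm {1..k} {}"
    and A2: "\<And>k U. 1 \<le> k \<Longrightarrow> k \<le> n - 2 \<Longrightarrow> U \<subseteq> {k + 2..n} \<Longrightarrow> card U \<ge> n - k - 2 \<Longrightarrow>
               condA Phi Fo Fm ({1..k} \<union> U) U"
  shows "gpd_equivalence (twocolim (Bposet {1..n} {}) Phi Fo Fm) (colim (Bposet {1..n} {}) Phi Fo Fm)
           (delta_obj (Bposet {1..n} {}) Phi Fo) (delta_arr (Bposet {1..n} {}) Phi Fo Fm)"
proof -
  interpret cube_diagram "Bposet {1..n} {}" Phi Fo Fm n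
  proof unfold_locales
    show "gpd_diagram (Bposet {1..n} {}) Phi Fo Fm" by (rule diag)
    \<comment> \<open>Only the instances k = n - 1 of A1 and U = {k + 2..n} of A2 are needed.\<close>
    show "condA Phi Fo Fm ({1..n} - {m}) {Suc m..n}" if "1 \<le> m" "m \<le> n" for m
      by (rule condA_facets) (use n2 A1 A2 that in auto)
  qed simp
  show ?thesis by (rule gpd_equivalence_delta_cube)
qed

end
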